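(* Consider the fluid model $\frac{d}{dt}x(t)=-u(t)+\alpha$ on $x(t)\ge0$ with inputs $u(t)\ge0$, where $\alpha>0$, and let $J^*(x)=\inf_u\int_0^\infty c^F(x(t),u(t))\,dt$ with $x(0)=x$. (i) For the polynomial cost $c^F(x,u)=x+\nu([u-\alpha]_+)^{\varrho}$ with $\nu>0$, $\varrho>1$, the fluid value function and optimal feedback policy are \[ J^*(x)=\nu\,x^{\frac{2\varrho-1}{\varrho}}\frac{\varrho^2}{2\varrho-1}\Bigl(\frac{1}{\nu(\varrho-1)}\Bigr)^{\frac{\varrho-1}{\varrho}},\qquad \phi^{F*}(x)=\Bigl(\frac{x}{\nu(\varrho-1)}\Bigr)^{1/\varrho}+\alpha. \] (ii) For the exponential cost $c^F(x,u)=x+\nu[e^{\kappa u}-e^{\kappa\alpha}]_+$ with $\nu>0$, $\kappa>0$, set $\tilde\beta=\nu e^{\kappa\alpha}$ and $\tilde x=x-\tilde\beta$. There are constants $C_-,C_+$ such that, whenever $x\ge\tilde\beta(e^2+1)$, \[ C_-+\frac{\kappa}{2}\,\frac{\tilde x^2}{\log(\tilde x)-\log(\nu)-(\kappa\alpha+1)}\le J^*(x)\le C_++\frac{\kappa}{2}\tilde x^2. \]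
   Context: $[z]_+=\max(0,z)$. The fluid model is the deterministic approximation of the speed scaling queue $X(t+1)=X(t)-U(t)+A(t+1)$ with arrival mean $\alpha$. *)

theory Defs
  imports "HOL-Analysis.Analysis"
begin

text \<open>Fluid model dx/dt = -u(t) + alpha, x(0) = x0. The state is the
 (absolutely continuous) solution x(t) = x0 + int_0^t (alpha - u(s)) ds.\<close>
definition fluid_state :: "real \<Rightarrow> real \<Rightarrow> (real \<Rightarrow> real) \<Rightarrow> real \<Rightarrow> real" where
  "fluid_state \<alpha> x0 u t = x0 + (LINT s:{0..t}|lborel. \<alpha> - u s)"

definition fluid_admissible :: "real \<Rightarrow> real \<Rightarrow> (real \<Rightarrow> real) \<Rightarrow> bool" where
  "fluid_admissible \<alpha> x0 u \<longleftrightarrow>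
     set_borel_measurable lborel {0..} u \<and>
     (\<forall>T\<ge>0. set_integrable lborel {0..T} u) \<and>
     (\<forall>t\<ge>0. u t \<ge> 0) \<and>
     (\<forall>t\<ge>0. fluid_state \<alpha> x0 u t \<ge> 0)"

definition fluid_cost :: "(real \<Rightarrow> real \<Rightarrow> real) \<Rightarrow> real \<Rightarrow> real \<Rightarrow> (real \<Rightarrow> real) \<Rightarrow> ennreal" where
  "fluid_cost c \<alpha> x0 u = (\<integral>\<^sup>+ t \<in> {0..}. ennreal (c (fluid_state \<alpha> x0 u t) (u t)) \<partial>lborel)"

definition fluid_value :: "(real \<Rightarrow> real \<Rightarrow> real) \<Rightarrow> real \<Rightarrow> real \<Rightarrow> ennreal" where
  "fluid_value c \<alpha> x0 = (INF u \<in> {u. fluid_admissible \<alpha> x0 u}. fluid_cost c \<alpha> x0 u)"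

definition poly_cost :: "real \<Rightarrow> real \<Rightarrow> real \<Rightarrow> real \<Rightarrow> real \<Rightarrow> real" where
  "poly_cost \<nu> \<rho> \<alpha> x u = x + \<nu> * (max 0 (u - \<alpha>)) powr \<rho>"

definition exp_cost :: "real \<Rightarrow> real \<Rightarrow> real \<Rightarrow> real \<Rightarrow> real \<Rightarrow> real" where
  "exp_cost \<nu> \<kappa> \<alpha> x u = x + \<nu> * max 0 (exp (\<kappa> * u) - exp (\<kappa> * \<alpha>))"

end

theory Submission
  imports Defs
begin

text \<open>Both parts rest on a verification argument. If \<open>V\<close> is continuous on \<open>[0,\<infinity>)\<close>,
  differentiable on \<open>(0,\<infinity>)\<close> and satisfies the HJB inequality
  \<open>V'(p) (w - \<alpha>) \<le> p + h(w)\<close>, then every admissible input from \<open>x\<^sub>0\<close> costs at least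
  \<open>V(x\<^sub>0) - V(0)\<close> for the running cost \<open>x + h(u)\<close>: on a fine partition of \<open>[0,T]\<close> the mean
  value theorem bounds the decrease of \<open>V\<close> along the state by the running cost, and a finite
  cost drives the state close to \<open>0\<close>, so one may let \<open>T \<rightarrow> \<infinity>\<close>.
  For the polynomial cost \<open>J\<^sup>*\<close> itself satisfies the HJB inequality (by Young's inequality),
  with equality along the feedback \<open>\<phi>\<^sup>F\<^sup>*\<close>; by the fundamental theorem of calculus the closed
  loop, which empties the queue in finite time, attains \<open>J\<^sup>*(x\<^sub>0)\<close>. For the exponential cost a
  piecewise quadratic/logarithmic subsolution gives the lower bound, and an input draining
  the queue by time \<open>\<kappa> x\<^sub>0/4\<close> gives the quadratic upper bound.\<close>

lemma fluid_admissible_state_nonneg: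
  "fluid_admissible \<alpha> x0 u \<Longrightarrow> 0 \<le> t \<Longrightarrow> 0 \<le> fluid_state \<alpha> x0 u t"
  and fluid_admissible_input_nonneg:
  "fluid_admissible \<alpha> x0 u \<Longrightarrow> 0 \<le> t \<Longrightarrow> 0 \<le> u t"
  unfolding fluid_admissible_def by auto

lemma fluid_admissible_set_integrable:
  assumes "fluid_admissible \<alpha> x0 u" "0 \<le> T"
  shows "set_integrable lborel {0..T} (\<lambda>s. \<alpha> - u s)"
proof -
  have "set_integrable lborel {0..T} (\<lambda>s. \<alpha>)"
    by (rule borel_integrable_atLeastAtMost') (rule continuous_on_const)
  moreover have "set_integrable lborel {0..T} u"
    using assms unfolding fluid_admissible_def by auto
  ultimately show ?thesis by (rule set_integral_diff(1))
qed

lemma fluid_state_0 [simp]: "fluid_state \<alpha> x0 u 0 = x0"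
proof -
  have "(LINT s:{0..0}|lborel. \<alpha> - u s) = 0"
    unfolding set_lebesgue_integral_def
    by (rule integral_eq_zero_AE)
       (rule eventually_mono[OF AE_lborel_singleton[of 0]], simp add: indicator_def)
  then show ?thesis unfolding fluid_state_def by simp
qed

lemma fluid_state_diff:
  assumes "fluid_admissible \<alpha> x0 u" "0 \<le> a" "a \<le> b"
  shows "fluid_state \<alpha> x0 u b - fluid_state \<alpha> x0 u a = (LINT s:{a<..b}|lborel. \<alpha> - u s)"
proof -
  have I: "set_integrable lborel {0..b} (\<lambda>s. \<alpha> - u s)"
    using fluid_admissible_set_integrable assms by auto
  have split: "{0..b} = {0..a} \<union> {a<..b}" using assms by auto
  have "(LINT s:{0..b}|lborel. \<alpha> - u s)
      = (LINT s:{0..a}|lborel. \<alpha> - u s) + (LINT s:{a<..b}|lborel. \<alpha> - u s)"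
    unfolding split
    by (rule set_integral_Un) (use assms in \<open>auto intro!: set_integrable_subset[OF I]\<close>)
  then show ?thesis unfolding fluid_state_def by simp
qed

lemma fluid_state_affine_set_integral:
  assumes adm: "fluid_admissible \<alpha> x0 u" and ab: "0 \<le> a" "a \<le> b"
  shows "set_integrable lborel {a<..b} (\<lambda>t. c * (u t - \<alpha>) - d)"
    and "(LINT t:{a<..b}|lborel. c * (u t - \<alpha>) - d)
      = c * (fluid_state \<alpha> x0 u a - fluid_state \<alpha> x0 u b) - d * (b - a)"
proof -
  have I: "set_integrable lborel {a<..b} (\<lambda>t. \<alpha> - u t)"
    by (rule set_integrable_subset[OF fluid_admissible_set_integrable[OF adm, of b]]) (use ab in auto)
  have Ic: "set_integrable lborel {a<..b} (\<lambda>t. d)"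
    by (rule set_integrable_subset[OF borel_integrable_atLeastAtMost'[OF continuous_on_const, of a b]]) auto
  have Im: "set_integrable lborel {a<..b} (\<lambda>t. (- c) * (\<alpha> - u t))"
    by (rule set_integrable_mult_right) (rule I)
  have "(\<lambda>t. c * (u t - \<alpha>) - d) = (\<lambda>t. (- c) * (\<alpha> - u t) - d)" by (simp add: fun_eq_iff algebra_simps)
  moreover have "set_integrable lborel {a<..b} (\<lambda>t. (- c) * (\<alpha> - u t) - d)"
    by (rule set_integral_diff(1)[OF Im Ic])
  moreover have "(LINT t:{a<..b}|lborel. (- c) * (\<alpha> - u t) - d)
      = (- c) * (LINT t:{a<..b}|lborel. \<alpha> - u t) - (LINT t:{a<..b}|lborel. d)"
    unfolding set_integral_diff(2)[OF Im Ic] set_integral_mult_right ..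
  moreover have "(LINT t:{a<..b}|lborel. d) = (b - a) * d"
    using ab by (subst set_integral_const) auto
  ultimately show "set_integrable lborel {a<..b} (\<lambda>t. c * (u t - \<alpha>) - d)"
    "(LINT t:{a<..b}|lborel. c * (u t - \<alpha>) - d)
      = c * (fluid_state \<alpha> x0 u a - fluid_state \<alpha> x0 u b) - d * (b - a)"
    using fluid_state_diff[OF adm ab] by (simp_all add: algebra_simps)
qed

lemma fluid_state_eq_integral:
  assumes "fluid_admissible \<alpha> x0 u" "0 \<le> t"
  shows "fluid_state \<alpha> x0 u t = x0 + integral {0..t} (\<lambda>s. \<alpha> - u s)"
  using set_borel_integral_eq_integral(2)[OF fluid_admissible_set_integrable[OF assms]]
  unfolding fluid_state_def by simp

lemma continuous_on_fluid_state_Icc: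
  assumes "fluid_admissible \<alpha> x0 u" "0 \<le> T"
  shows "continuous_on {0..T} (fluid_state \<alpha> x0 u)"
proof -
  have "(\<lambda>s. \<alpha> - u s) integrable_on {0..T}"
    using set_borel_integral_eq_integral(1)[OF fluid_admissible_set_integrable[OF assms]] .
  then have "continuous_on {0..T} (\<lambda>t. x0 + integral {0..t} (\<lambda>s. \<alpha> - u s))"
    by (intro continuous_intros indefinite_integral_continuous_1)
  then show ?thesis
    by (rule continuous_on_cong[THEN iffD1, rotated 2]) (use assms fluid_state_eq_integral in auto)
qed

text \<open>Extending the state by its initial value to negative times makes it a measurable
  function on the whole line.\<close>

lemma continuous_on_fluid_state_extended:
  assumes "fluid_admissible \<alpha> x0 u"
  shows "continuous_on UNIV (\<lambda>t. fluid_state \<alpha> x0 u (max 0 t))"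
proof -
  have "continuous_on (\<Union>T\<in>{0::real<..}. {..<T}) (\<lambda>t. fluid_state \<alpha> x0 u (max 0 t))"
  proof (rule continuous_on_open_UN)
    fix T :: real assume T: "T \<in> {0<..}"
    have "continuous_on (max 0 ` {..<T}) (fluid_state \<alpha> x0 u)"
      by (rule continuous_on_subset[OF continuous_on_fluid_state_Icc[OF assms, of T]]) (use T in auto)
    then show "continuous_on {..<T} (\<lambda>t. fluid_state \<alpha> x0 u (max 0 t))"
      using continuous_on_compose[of "{..<T}" "max 0" "fluid_state \<alpha> x0 u"]
      by (simp add: o_def continuous_on_max)
  qed auto
  moreover have "t \<in> (\<Union>T\<in>{0::real<..}. {..<T})" for t
    by (rule UN_I[of "max 1 (t + 1)"]) auto
  then have "(\<Union>T\<in>{0::real<..}. {..<T}) = UNIV" by blast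
  ultimately show ?thesis by simp
qed

lemma borel_measurable_fluid_state_extended:
  assumes "fluid_admissible \<alpha> x0 u"
  shows "(\<lambda>t. fluid_state \<alpha> x0 u (max 0 t)) \<in> borel_measurable borel"
  by (rule borel_measurable_continuous_onI[OF continuous_on_fluid_state_extended[OF assms]])

section \<open>Verification of lower bounds\<close>

lemma ennreal_set_integral_le_nn_integral:
  fixes g :: "real \<Rightarrow> real"
  assumes "set_integrable lborel A g"
  shows "ennreal (LINT t:A|lborel. g t) \<le> (\<integral>\<^sup>+t. ennreal (g t) * indicator A t \<partial>lborel)"
proof -
  let ?f = "\<lambda>t. indicator A t *\<^sub>R g t"
  have int: "integrable lborel ?f" using assms unfolding set_integrable_def .
  have int2: "integrable lborel (\<lambda>t. max 0 (?f t))" by (intro integrable_max int) auto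
  have "(LINT t:A|lborel. g t) \<le> integral\<^sup>L lborel (\<lambda>t. max 0 (?f t))"
    unfolding set_lebesgue_integral_def by (intro integral_mono int int2) auto
  then have "ennreal (LINT t:A|lborel. g t) \<le> ennreal (integral\<^sup>L lborel (\<lambda>t. max 0 (?f t)))"
    by (rule ennreal_leI)
  also have "\<dots> = (\<integral>\<^sup>+t. ennreal (max 0 (?f t)) \<partial>lborel)"
    by (rule nn_integral_eq_integral[symmetric]) (use int2 in auto)
  also have "\<dots> = (\<integral>\<^sup>+t. ennreal (g t) * indicator A t \<partial>lborel)"
    by (intro nn_integral_cong) (auto simp: indicator_def ennreal_max_0)
  finally show ?thesis .
qed

lemma ennreal_sum_le_sum_ennreal: "ennreal (\<Sum>i\<in>I. f i) \<le> (\<Sum>i\<in>I. ennreal (f i))"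
proof -
  have "ennreal (\<Sum>i\<in>I. f i) \<le> ennreal (\<Sum>i\<in>I. max 0 (f i))"
    by (intro ennreal_leI sum_mono) simp
  also have "\<dots> = (\<Sum>i\<in>I. ennreal (f i))"
    by (simp add: ennreal_max_0 sum_ennreal[symmetric])
  finally show ?thesis .
qed

lemma sum_telescope_minus_const:
  fixes f :: "nat \<Rightarrow> real"
  shows "(\<Sum>k<N. f k - f (Suc k) - d) = f 0 - f N - real N * d"
  by (induction N) (simp_all add: algebra_simps)

lemma sum_indicator_consecutive_intervals:
  fixes c t :: real
  assumes "0 < c"
  shows "(\<Sum>k<n. indicator {real k * c<..real (Suc k) * c} t :: ennreal) = indicator {0<..real n * c} t"
proof (induction n)
  case (Suc n)
  have n: "0 \<le> c * real n" using assms by simp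
  show ?case
    using Suc assms by (auto simp: indicator_def algebra_simps) (use n in linarith)
qed simp

lemma fine_uniform_partition:
  fixes T d :: real
  assumes "0 < T" "0 < d"
  obtains N :: nat and c where "0 < c" "real N * c = T" "c < d"
proof -
  obtain n :: nat where n: "T / d < real n" using reals_Archimedean2 by blast
  show thesis
  proof
    show "0 < T / real (Suc n)" "real (Suc n) * (T / real (Suc n)) = T"
      using assms by simp_all
    show "T / real (Suc n) < d" using n assms by (simp add: field_simps)
  qed
qed

lemma nn_integral_ge_sum_over_partition:
  fixes G :: "real \<Rightarrow> ennreal"
  assumes G: "G \<in> borel_measurable lborel" and c: "0 < c"
    and pieces: "\<And>k. k < N \<Longrightarrow>
      ennreal (a k) \<le> (\<integral>\<^sup>+t. G t * indicator {real k * c<..real (Suc k) * c} t \<partial>lborel)"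
  shows "ennreal (\<Sum>k<N. a k) \<le> (\<integral>\<^sup>+t. G t * indicator {0<..real N * c} t \<partial>lborel)"
proof -
  have "ennreal (\<Sum>k<N. a k) \<le> (\<Sum>k<N. ennreal (a k))"
    by (rule ennreal_sum_le_sum_ennreal)
  also have "\<dots> \<le> (\<Sum>k<N. \<integral>\<^sup>+t. G t * indicator {real k * c<..real (Suc k) * c} t \<partial>lborel)"
    by (intro sum_mono pieces) simp
  also have "\<dots> = (\<integral>\<^sup>+t. (\<Sum>k<N. G t * indicator {real k * c<..real (Suc k) * c} t) \<partial>lborel)"
    by (rule nn_integral_sum[symmetric]) (use G in simp)
  also have "\<dots> = (\<integral>\<^sup>+t. G t * indicator {0<..real N * c} t \<partial>lborel)"
    by (simp only: sum_distrib_left[symmetric] sum_indicator_consecutive_intervals[OF c])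
  finally show ?thesis .
qed

lemma nn_integral_halfline_le_if_bounded:
  fixes f :: "real \<Rightarrow> ennreal"
  assumes f: "f \<in> borel_measurable lborel"
    and bounded: "\<And>T. 0 \<le> T \<Longrightarrow> (\<integral>\<^sup>+t. f t * indicator {0..T} t \<partial>lborel) \<le> B"
  shows "(\<integral>\<^sup>+t\<in>{0..}. f t \<partial>lborel) \<le> B"
proof -
  have "f t * indicator {0..} t = (SUP n. f t * indicator {0..real n} t)" for t
  proof (cases "0 \<le> t")
    case True
    obtain n where "t \<le> real n" using real_arch_simple by blast
    then show ?thesis
      using True by (intro antisym SUP_upper2[of n] SUP_least) (auto simp: indicator_def)
  qed (simp add: indicator_def)
  then have "(\<integral>\<^sup>+t\<in>{0..}. f t \<partial>lborel) = (\<integral>\<^sup>+t. (SUP n. f t * indicator {0..real n} t) \<partial>lborel)"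
    by simp
  also have "\<dots> = (SUP n. \<integral>\<^sup>+t. f t * indicator {0..real n} t \<partial>lborel)"
    using f by (intro nn_integral_monotone_convergence_SUP)
       (auto simp: incseq_def le_fun_def indicator_def intro!: mult_left_mono)
  also have "\<dots> \<le> B" by (intro SUP_least bounded) simp
  finally show ?thesis .
qed

lemma MVT_between:
  fixes V V' :: "real \<Rightarrow> real"
  assumes Vc: "continuous_on {0..} V"
    and Vd: "\<And>p. 0 < p \<Longrightarrow> (V has_real_derivative V' p) (at p)"
    and "0 \<le> s" "0 \<le> e" "s \<noteq> e"
  shows "\<exists>\<xi>. min s e < \<xi> \<and> \<xi> < max s e \<and> V s - V e = V' \<xi> * (s - e)"
proof -
  have ordered: "\<exists>\<xi>. a < \<xi> \<and> \<xi> < b \<and> V b - V a = V' \<xi> * (b - a)" if ab: "0 \<le> a" "a < b" for a b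
  proof -
    have "continuous_on {a..b} V" by (rule continuous_on_subset[OF Vc]) (use ab in auto)
    moreover have "\<And>x. a < x \<Longrightarrow> x < b \<Longrightarrow> V differentiable (at x)"
      using Vd ab unfolding has_field_derivative_def differentiable_def by (meson le_less_trans)
    ultimately obtain l z where z: "a < z" "z < b" "DERIV V z :> l" "V b - V a = (b - a) * l"
      using MVT[OF ab(2)] by blast
    have "l = V' z" using DERIV_unique[OF z(3) Vd] z ab by auto
    then show ?thesis using z by (auto simp: mult.commute)
  qed
  show ?thesis
  proof (cases "s < e")
    case True
    then show ?thesis using ordered[of s e] assms by (auto simp: algebra_simps)
  next
    case False
    then show ?thesis using ordered[of e s] assms by auto
  qed
qed

locale hjb_subsolution =
  fixes \<alpha> :: real and h V V' :: "real \<Rightarrow> real"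
  assumes continuous: "continuous_on {0..} V"
    and deriv: "\<And>p. 0 < p \<Longrightarrow> (V has_real_derivative V' p) (at p)"
    and hjb: "\<And>p w. 0 < p \<Longrightarrow> 0 \<le> w \<Longrightarrow> V' p * (w - \<alpha>) \<le> p + h w"
    and measurable_h: "h \<in> borel_measurable borel"
    and h_nonneg: "\<And>w. 0 \<le> w \<Longrightarrow> 0 \<le> h w"
begin

text \<open>By the mean value theorem, \<open>V(x(a)) - V(x(b)) = V'(\<xi>) \<integral>\<^sub>a\<^sup>b (u - \<alpha>)\<close> for some
  \<open>\<xi>\<close> between \<open>x(a)\<close> and \<open>x(b)\<close>; the HJB inequality at \<open>\<xi>\<close> bounds the integrand by
  \<open>\<xi> + h(u) \<le> x + 2\<delta> + h(u)\<close> when the state moves by at most \<open>\<delta>\<close> on \<open>[a,b]\<close>.\<close>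

lemma decrease_le_interval_cost:
  assumes adm: "fluid_admissible \<alpha> x0 u"
    and ab: "0 \<le> a" "a \<le> b" and \<delta>: "0 \<le> \<delta>"
    and close: "\<And>t. t \<in> {a..b} \<Longrightarrow> \<bar>fluid_state \<alpha> x0 u t - fluid_state \<alpha> x0 u a\<bar> \<le> \<delta>"
  shows "ennreal (V (fluid_state \<alpha> x0 u a) - V (fluid_state \<alpha> x0 u b) - 2*\<delta>*(b-a))
     \<le> (\<integral>\<^sup>+t. ennreal (fluid_state \<alpha> x0 u t + h (u t)) * indicator {a<..b} t \<partial>lborel)"
proof -
  define x where "x = fluid_state \<alpha> x0 u"
  define s where "s = x a"
  define e where "e = x b"
  have s0: "0 \<le> s" "0 \<le> e"
    using fluid_admissible_state_nonneg[OF adm] ab unfolding s_def e_def x_def by auto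
  show ?thesis
  proof (cases "s = e")
    case True
    then have "V (x a) - V (x b) - 2*\<delta>*(b-a) \<le> 0" using ab \<delta> unfolding s_def e_def by auto
    then show ?thesis unfolding x_def by (simp add: ennreal_neg)
  next
    case False
    obtain \<xi> where \<xi>: "min s e < \<xi>" "\<xi> < max s e" "V s - V e = V' \<xi> * (s - e)"
      using MVT_between[OF continuous deriv s0 False] by blast
    define g where "g = (\<lambda>t. V' \<xi> * (u t - \<alpha>) - 2*\<delta>)"
    have Ig: "set_integrable lborel {a<..b} g"
      unfolding g_def by (rule fluid_state_affine_set_integral(1)[OF adm ab])
    have integral_g: "(LINT t:{a<..b}|lborel. g t) = V s - V e - 2*\<delta>*(b-a)"
      using \<xi>(3) unfolding g_def fluid_state_affine_set_integral(2)[OF adm ab] s_def e_def x_def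
      by (simp add: algebra_simps)
    have g_le: "g t \<le> x t + h (u t)" if t: "t \<in> {a<..b}" for t
    proof -
      have "\<bar>x t - s\<bar> \<le> \<delta>" "\<bar>e - s\<bar> \<le> \<delta>"
        using close[of t] close[of b] t ab unfolding x_def s_def e_def by auto
      then have "\<xi> \<le> x t + 2*\<delta>" using \<xi>(2) by (auto simp: max_def abs_if split: if_splits)
      moreover have "0 < \<xi>" using \<xi>(1) s0 by auto
      then have "V' \<xi> * (u t - \<alpha>) \<le> \<xi> + h (u t)"
        using hjb fluid_admissible_input_nonneg[OF adm, of t] t ab by auto
      ultimately show ?thesis unfolding g_def by (simp add: algebra_simps)
    qed
    have "ennreal (V s - V e - 2*\<delta>*(b-a)) \<le> (\<integral>\<^sup>+t. ennreal (g t) * indicator {a<..b} t \<partial>lborel)"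
      using ennreal_set_integral_le_nn_integral[OF Ig] unfolding integral_g .
    also have "\<dots> \<le> (\<integral>\<^sup>+t. ennreal (x t + h (u t)) * indicator {a<..b} t \<partial>lborel)"
      by (intro nn_integral_mono) (auto simp: indicator_def intro!: ennreal_leI g_le)
    finally show ?thesis unfolding s_def e_def x_def .
  qed
qed

lemma borel_measurable_running_cost:
  assumes adm: "fluid_admissible \<alpha> x0 u"
  shows "(\<lambda>t. ennreal (fluid_state \<alpha> x0 u t + h (u t)) * indicator {0..} t) \<in> borel_measurable lborel"
proof -
  have "(\<lambda>t. indicator {0..} t * u t) \<in> borel_measurable borel"
    using adm unfolding fluid_admissible_def set_borel_measurable_def by simp
  then have [measurable]: "(\<lambda>t. fluid_state \<alpha> x0 u (max 0 t) + h (indicator {0..} t * u t))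
      \<in> borel_measurable borel"
    using borel_measurable_fluid_state_extended[OF adm] measurable_compose[OF _ measurable_h]
    by (intro borel_measurable_add) (auto simp: o_def)
  have "(\<lambda>t. ennreal (fluid_state \<alpha> x0 u (max 0 t) + h (indicator {0..} t * u t)) * indicator {0..} t)
      \<in> borel_measurable lborel"
    by measurable
  then show ?thesis
    by (rule measurable_cong[THEN iffD1, rotated]) (auto simp: indicator_def)
qed

lemma decrease_le_horizon_cost:
  assumes adm: "fluid_admissible \<alpha> x0 u" and T: "0 \<le> T" and \<delta>: "0 < \<delta>"
  shows "ennreal (V x0 - V (fluid_state \<alpha> x0 u T) - 2*\<delta>*T)
     \<le> (\<integral>\<^sup>+t\<in>{0..}. ennreal (fluid_state \<alpha> x0 u t + h (u t)) \<partial>lborel)"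
proof (cases "T = 0")
  case False
  define x where "x = fluid_state \<alpha> x0 u"
  define G where "G = (\<lambda>t. ennreal (x t + h (u t)) * indicator {0..} t)"
  have "uniformly_continuous_on {0..T} x"
    unfolding x_def by (rule compact_uniformly_continuous[OF continuous_on_fluid_state_Icc[OF adm T]]) simp
  then obtain d where d: "0 < d"
    "\<And>s t. s \<in> {0..T} \<Longrightarrow> t \<in> {0..T} \<Longrightarrow> dist t s < d \<Longrightarrow> dist (x t) (x s) < \<delta>"
    unfolding uniformly_continuous_on_def using \<delta> by metis
  have "0 < T" using False T by simp
  then obtain N :: nat and c where c: "0 < c" "real N * c = T" "c < d"
    by (rule fine_uniform_partition[OF _ d(1)])
  have piece: "ennreal (V (x (real k * c)) - V (x (real (Suc k) * c)) - 2*\<delta>*c)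
      \<le> (\<integral>\<^sup>+t. G t * indicator {real k * c<..real (Suc k) * c} t \<partial>lborel)" if k: "k < N" for k
  proof -
    have "real (Suc k) * c \<le> real N * c" using k c(1) by (intro mult_right_mono) auto
    then have kc: "0 \<le> real k * c" "real k * c \<le> real (Suc k) * c" "real (Suc k) * c \<le> T"
      using c by auto
    have "ennreal (V (x (real k * c)) - V (x (real (Suc k) * c)) - 2*\<delta>*(real (Suc k) * c - real k * c))
      \<le> (\<integral>\<^sup>+t. ennreal (x t + h (u t)) * indicator {real k * c<..real (Suc k) * c} t \<partial>lborel)"
      unfolding x_def
    proof (rule decrease_le_interval_cost[OF adm kc(1,2)])
      fix t assume t: "t \<in> {real k * c..real (Suc k) * c}"
      have "t \<in> {0..T}" "dist t (real k * c) < d"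
        using t kc c(3) order_trans[OF kc(1)] by (auto simp: dist_real_def algebra_simps)
      then have "dist (x t) (x (real k * c)) < \<delta>"
        using kc by (intro d(2)) auto
      then show "\<bar>fluid_state \<alpha> x0 u t - fluid_state \<alpha> x0 u (real k * c)\<bar> \<le> \<delta>"
        unfolding x_def dist_real_def by simp
    qed (use \<delta> in simp)
    also have "\<dots> = (\<integral>\<^sup>+t. G t * indicator {real k * c<..real (Suc k) * c} t \<partial>lborel)"
      using kc(1) unfolding G_def by (intro nn_integral_cong) (auto simp: indicator_def)
    finally show ?thesis by (simp add: algebra_simps)
  qed
  have "real N * (2*\<delta>*c) = 2*\<delta>*T" using c(2) by (metis mult.commute mult.left_commute)
  then have telescope: "(\<Sum>k<N. V (x (real k * c)) - V (x (real (Suc k) * c)) - 2*\<delta>*c)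
      = V x0 - V (x T) - 2*\<delta>*T"
    using sum_telescope_minus_const[of "\<lambda>k. V (x (real k * c))"] c(2) by (simp add: x_def)
  have "ennreal (V x0 - V (x T) - 2*\<delta>*T) \<le> (\<integral>\<^sup>+t. G t * indicator {0<..real N * c} t \<partial>lborel)"
    unfolding telescope[symmetric]
    by (rule nn_integral_ge_sum_over_partition[OF _ c(1) piece])
       (use borel_measurable_running_cost[OF adm] in \<open>simp_all add: G_def x_def\<close>)
  also have "\<dots> \<le> (\<integral>\<^sup>+t. G t \<partial>lborel)"
    by (intro nn_integral_mono) (auto simp: indicator_def)
  finally show ?thesis unfolding G_def x_def .
qed simp

text \<open>Since the running cost dominates the state, a finite cost forces the state below
  any level at some time.\<close>

lemma state_small_if_cost_finite:
  assumes adm: "fluid_admissible \<alpha> x0 u"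
    and cost: "(\<integral>\<^sup>+t\<in>{0..}. ennreal (fluid_state \<alpha> x0 u t + h (u t)) \<partial>lborel) = ennreal C"
    and \<eta>: "0 < \<eta>"
  obtains T where "0 \<le> T" "fluid_state \<alpha> x0 u T < \<eta>"
proof (rule ccontr)
  assume "\<not> thesis"
  then have large: "\<And>T. 0 \<le> T \<Longrightarrow> \<eta> \<le> fluid_state \<alpha> x0 u T" using that by force
  obtain n :: nat where n: "max 0 C / \<eta> < real n" using reals_Archimedean2 by blast
  then have "0 < \<eta> * real n" using \<eta> by (simp add: field_simps)
  have "ennreal (\<eta> * real n) = (\<integral>\<^sup>+t. ennreal \<eta> * indicator {0..real n} t \<partial>lborel)"
    using \<eta> by (simp add: nn_integral_cmult_indicator ennreal_mult)
  also have "\<dots> \<le> ennreal C"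
    unfolding cost[symmetric] using \<eta> h_nonneg fluid_admissible_input_nonneg[OF adm]
    by (intro nn_integral_mono) (auto simp: indicator_def intro!: ennreal_leI large add_increasing2)
  finally have "\<eta> * real n \<le> C" using \<open>0 < \<eta> * real n\<close> ennreal_le_iff2 by auto
  then show False using n \<eta> by (simp add: field_simps)
qed

lemma cost_ge_decrease:
  assumes adm: "fluid_admissible \<alpha> x0 u"
  shows "ennreal (V x0 - V 0) \<le> fluid_cost (\<lambda>x w. x + h w) \<alpha> x0 u"
proof (cases "fluid_cost (\<lambda>x w. x + h w) \<alpha> x0 u")
  case (real C)
  then have cost: "(\<integral>\<^sup>+t\<in>{0..}. ennreal (fluid_state \<alpha> x0 u t + h (u t)) \<partial>lborel) = ennreal C"
    unfolding fluid_cost_def by simp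
  have "V x0 - V 0 \<le> C"
  proof (rule field_le_epsilon)
    fix \<epsilon> :: real assume \<epsilon>: "0 < \<epsilon>"
    obtain \<eta> where \<eta>: "0 < \<eta>" "\<And>p. p \<in> {0..} \<Longrightarrow> dist p 0 < \<eta> \<Longrightarrow> dist (V p) (V 0) < \<epsilon>/2"
      using continuous \<epsilon> unfolding continuous_on_iff by (metis atLeast_iff half_gt_zero order_refl)
    obtain T where T: "0 \<le> T" "fluid_state \<alpha> x0 u T < \<eta>"
      using state_small_if_cost_finite[OF adm cost \<eta>(1)] .
    have "\<bar>V (fluid_state \<alpha> x0 u T) - V 0\<bar> < \<epsilon>/2"
      using \<eta>(2)[of "fluid_state \<alpha> x0 u T"] fluid_admissible_state_nonneg[OF adm T(1)] T(2)
      by (auto simp: dist_real_def)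
    moreover define \<delta> where "\<delta> = \<epsilon> / (4 * (T + 1))"
    have "0 < \<delta>" "2*\<delta>*T \<le> \<epsilon>/2" unfolding \<delta>_def using \<epsilon> T by (auto simp: field_simps)
    moreover have "V x0 - V (fluid_state \<alpha> x0 u T) - 2*\<delta>*T \<le> C"
      using decrease_le_horizon_cost[OF adm T(1) \<open>0 < \<delta>\<close>] cost real by simp
    ultimately show "V x0 - V 0 \<le> C + \<epsilon>" by linarith
  qed
  then show ?thesis using real by simp
qed simp

end

lemma fluid_admissible_of_trajectory:
  fixes X U :: "real \<Rightarrow> real"
  assumes X_cont: "continuous_on UNIV X" and U_cont: "continuous_on UNIV U" and S: "finite S"
    and X_deriv: "\<And>t. 0 < t \<Longrightarrow> t \<notin> S \<Longrightarrow> (X has_real_derivative (\<alpha> - U t)) (at t)"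
    and X0: "X 0 = x0" and U_nonneg: "\<And>t. 0 \<le> t \<Longrightarrow> 0 \<le> U t"
    and X_nonneg: "\<And>t. 0 \<le> t \<Longrightarrow> 0 \<le> X t"
  shows "fluid_admissible \<alpha> x0 U" "\<And>t. 0 \<le> t \<Longrightarrow> fluid_state \<alpha> x0 U t = X t"
proof -
  have U_int: "set_integrable lborel {0..T} U" for T
    by (rule borel_integrable_atLeastAtMost'[OF continuous_on_subset[OF U_cont]]) auto
  show state: "fluid_state \<alpha> x0 U t = X t" if t: "0 \<le> t" for t
  proof -
    have I: "set_integrable lborel {0..t} (\<lambda>s. \<alpha> - U s)"
      by (rule borel_integrable_atLeastAtMost') (intro continuous_intros continuous_on_subset[OF U_cont]; simp)
    have "((\<lambda>s. \<alpha> - U s) has_integral (X t - X 0)) {0..t}"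
    proof (rule fundamental_theorem_of_calculus_interior_strong[OF S t])
      show "continuous_on {0..t} X" by (rule continuous_on_subset[OF X_cont]) auto
    qed (use X_deriv in \<open>auto simp flip: has_real_derivative_iff_has_vector_derivative\<close>)
    then have "integral {0..t} (\<lambda>s. \<alpha> - U s) = X t - X 0" by (rule integral_unique)
    then show ?thesis
      unfolding fluid_state_def set_borel_integral_eq_integral(2)[OF I] using X0 by simp
  qed
  have [measurable]: "U \<in> borel_measurable borel"
    by (rule borel_measurable_continuous_onI[OF U_cont])
  show "fluid_admissible \<alpha> x0 U"
    unfolding fluid_admissible_def set_borel_measurable_def
    using U_int U_nonneg X_nonneg state by (auto simp del: fluid_state_0)
qed

lemma fluid_state_has_derivative_within:
  assumes adm: "fluid_admissible \<alpha> x0 u" and u_cont: "continuous_on {0..T} u" and t: "t \<in> {0..T}"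
  shows "(fluid_state \<alpha> x0 u has_real_derivative (\<alpha> - u t)) (at t within {0..T})"
proof -
  have "((\<lambda>s. integral {0..s} (\<lambda>r. \<alpha> - u r)) has_real_derivative (\<alpha> - u t)) (at t within {0..T})"
    using integral_has_vector_derivative[OF _ t, of "\<lambda>r. \<alpha> - u r"] u_cont
    by (simp add: continuous_intros has_real_derivative_iff_has_vector_derivative)
  then have "((\<lambda>s. x0 + integral {0..s} (\<lambda>r. \<alpha> - u r)) has_real_derivative (\<alpha> - u t)) (at t within {0..T})"
    using DERIV_add[OF DERIV_const] by fastforce
  then show ?thesis
    by (rule has_field_derivative_transform_within[of _ _ t _ 1])
       (use t fluid_state_eq_integral[OF adm] in auto)
qed

lemma DERIV_if_le_off:
  fixes g h :: "real \<Rightarrow> real"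
  assumes "x \<noteq> c"
    and "x < c \<Longrightarrow> (g has_real_derivative D) (at x)" and "c < x \<Longrightarrow> (h has_real_derivative D) (at x)"
  shows "((\<lambda>x. if x \<le> c then g x else h x) has_real_derivative D) (at x)"
proof (cases "x < c")
  case True
  have "eventually (\<lambda>y. y < c) (nhds x)" using True by (rule eventually_nhds_in_open[OF open_lessThan, simplified])
  then have "eventually (\<lambda>y. (if y \<le> c then g y else h y) = g y) (nhds x)" by eventually_elim auto
  from DERIV_cong_ev[OF refl this refl] show ?thesis using assms(2)[OF True] by simp
next
  case False
  then have "c < x" using assms(1) by simp
  then have "eventually (\<lambda>y. c < y) (nhds x)" by (rule eventually_nhds_in_open[OF open_greaterThan, simplified])
  then have "eventually (\<lambda>y. (if y \<le> c then g y else h y) = h y) (nhds x)" by eventually_elim auto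
  from DERIV_cong_ev[OF refl this refl] show ?thesis using assms(3)[OF \<open>c < x\<close>] by simp
qed

lemma DERIV_if_le_join:
  fixes g h :: "real \<Rightarrow> real"
  assumes g: "(g has_real_derivative D) (at c)" and h: "(h has_real_derivative D) (at c)"
    and gh: "g c = h c"
  shows "((\<lambda>x. if x \<le> c then g x else h x) has_real_derivative D) (at c)"
proof -
  define f where "f = (\<lambda>x. if x \<le> c then g x else h x)"
  have "((\<lambda>y. (g y - g c) / (y - c)) \<longlongrightarrow> D) (at c within {..c})"
    using g unfolding has_field_derivative_iff by (rule tendsto_mono[OF at_le, rotated]) auto
  then have left: "((\<lambda>y. (f y - f c) / (y - c)) \<longlongrightarrow> D) (at c within {..c})"
    by (rule Lim_transform_eventually) (auto simp: eventually_at_filter f_def)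
  have "((\<lambda>y. (h y - h c) / (y - c)) \<longlongrightarrow> D) (at c within {c..})"
    using h unfolding has_field_derivative_iff by (rule tendsto_mono[OF at_le, rotated]) auto
  then have right: "((\<lambda>y. (f y - f c) / (y - c)) \<longlongrightarrow> D) (at c within {c..})"
    by (rule Lim_transform_eventually) (auto simp: eventually_at_filter f_def gh)
  have "((\<lambda>y. (f y - f c) / (y - c)) \<longlongrightarrow> D) (at c within {..c} \<union> {c..})"
    using left right by (simp add: Lim_within_Un)
  moreover have "{..c} \<union> {c..} = UNIV" by auto
  ultimately show ?thesis unfolding has_field_derivative_iff f_def by simp
qed

lemma DERIV_if_le:
  fixes g h :: "real \<Rightarrow> real"
  assumes g: "\<And>x. x \<le> c \<Longrightarrow> (g has_real_derivative g' x) (at x)"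
    and h: "\<And>x. c \<le> x \<Longrightarrow> (h has_real_derivative h' x) (at x)"
    and "g c = h c" and "g' c = h' c"
  shows "((\<lambda>x. if x \<le> c then g x else h x) has_real_derivative (if x \<le> c then g' x else h' x)) (at x)"
proof (cases "x = c")
  case True
  then show ?thesis using DERIV_if_le_join[of g "g' c" c h] g[of c] h[of c] assms(3,4) by simp
next
  case False
  show ?thesis
  proof (rule DERIV_if_le_off[OF False])
    assume "x < c"
    then show "(g has_real_derivative (if x \<le> c then g' x else h' x)) (at x)" using g[of x] by simp
  next
    assume "c < x"
    then show "(h has_real_derivative (if x \<le> c then g' x else h' x)) (at x)" using h[of x] by simp
  qed
qed

lemma powr_has_real_derivative_within_nonneg:
  fixes m p :: real
  assumes m: "1 < m" and p: "0 \<le> p"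
  shows "((\<lambda>y. y powr m) has_real_derivative (m * p powr (m - 1))) (at p within {0..})"
proof (cases "0 < p")
  case True
  show ?thesis using has_real_derivative_powr[OF True, of m] by (rule has_field_derivative_at_within)
next
  case False
  then have p0: "p = 0" using p by auto
  have nonneg: "eventually (\<lambda>y. 0 \<le> y) (at (0::real) within {0..})"
    by (simp add: eventually_at_filter)
  have "((\<lambda>y. y powr (m - 1)) \<longlongrightarrow> 0 powr (m - 1)) (at (0::real) within {0..})"
    by (rule tendsto_powr') (use m nonneg in \<open>auto intro: tendsto_ident_at\<close>)
  then have "((\<lambda>y. y powr (m - 1)) \<longlongrightarrow> 0) (at (0::real) within {0..})" using m by simp
  then have "((\<lambda>y. (y powr m - 0 powr m) / (y - 0)) \<longlongrightarrow> 0) (at (0::real) within {0..})"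
    by (rule Lim_transform_eventually) (simp add: eventually_at_filter powr_diff)
  then show ?thesis unfolding p0 has_field_derivative_iff using m by simp
qed

section \<open>Polynomial cost\<close>

definition poly_value :: "real \<Rightarrow> real \<Rightarrow> real \<Rightarrow> real" where
  "poly_value \<nu> \<rho> p = \<nu> * p powr ((2*\<rho> - 1) / \<rho>) * (\<rho>^2 / (2*\<rho> - 1))
     * (1 / (\<nu> * (\<rho> - 1))) powr ((\<rho> - 1) / \<rho>)"

definition poly_value_deriv :: "real \<Rightarrow> real \<Rightarrow> real \<Rightarrow> real" where
  "poly_value_deriv \<nu> \<rho> p = \<nu> * \<rho> * (p / (\<nu> * (\<rho> - 1))) powr ((\<rho> - 1) / \<rho>)"

definition poly_feedback :: "real \<Rightarrow> real \<Rightarrow> real \<Rightarrow> real \<Rightarrow> real" where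
  "poly_feedback \<nu> \<rho> \<alpha> p = (p / (\<nu> * (\<rho> - 1))) powr (1/\<rho>) + \<alpha>"

lemma poly_cost_eq: "poly_cost \<nu> \<rho> \<alpha> = (\<lambda>x w. x + \<nu> * max 0 (w - \<alpha>) powr \<rho>)"
  by (simp add: fun_eq_iff poly_cost_def)

lemma poly_value_0: "poly_value \<nu> \<rho> 0 = 0"
  by (simp add: poly_value_def)

lemma poly_value_nonneg: "0 < \<nu> \<Longrightarrow> 1 < \<rho> \<Longrightarrow> 0 \<le> poly_value \<nu> \<rho> p"
  unfolding poly_value_def by simp

lemma poly_value_has_derivative_within:
  assumes \<nu>: "0 < \<nu>" and \<rho>: "1 < \<rho>" and p: "0 \<le> p"
  shows "(poly_value \<nu> \<rho> has_real_derivative poly_value_deriv \<nu> \<rho> p) (at p within {0..})"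
    and "0 < p \<Longrightarrow> (poly_value \<nu> \<rho> has_real_derivative poly_value_deriv \<nu> \<rho> p) (at p)"
proof -
  define m where "m = (2*\<rho> - 1) / \<rho>"
  define q where "q = (\<rho> - 1) / \<rho>"
  define K where "K = \<nu> * (\<rho> - 1)"
  define C where "C = \<nu> * (\<rho>^2 / (2*\<rho> - 1)) * (1 / K) powr q"
  have m: "1 < m" "m - 1 = q" unfolding m_def q_def using \<rho> by (auto simp: field_simps)
  have V: "poly_value \<nu> \<rho> = (\<lambda>p. C * p powr m)"
    unfolding poly_value_def C_def m_def q_def K_def by (auto simp: fun_eq_iff)
  have K: "0 < K" unfolding K_def using \<nu> \<rho> by simp
  have "C * (m * p powr (m - 1)) = \<nu> * ((\<rho>^2 / (2*\<rho> - 1)) * m) * ((1 / K) powr q * p powr q)"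
    unfolding C_def m(2) by (simp add: mult_ac)
  also have "(\<rho>^2 / (2*\<rho> - 1)) * m = \<rho>"
    unfolding m_def using \<rho> by (simp add: field_simps power2_eq_square)
  also have "(1 / K) powr q * p powr q = (p / K) powr q"
    using K p by (simp add: powr_divide)
  finally have V': "C * (m * p powr (m - 1)) = poly_value_deriv \<nu> \<rho> p"
    unfolding poly_value_deriv_def K_def q_def .
  show "(poly_value \<nu> \<rho> has_real_derivative poly_value_deriv \<nu> \<rho> p) (at p within {0..})"
    unfolding V V'[symmetric] by (intro DERIV_cmult powr_has_real_derivative_within_nonneg m(1) p)
  show "(poly_value \<nu> \<rho> has_real_derivative poly_value_deriv \<nu> \<rho> p) (at p)" if "0 < p"
    unfolding V V'[symmetric] by (intro DERIV_cmult has_real_derivative_powr that)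
qed

text \<open>Young's inequality \<open>z b \<le> z^\<rho>/\<rho> + b^Q/Q\<close> with conjugate exponent \<open>Q = \<rho>/(\<rho>-1)\<close>
  and \<open>b = (p/(\<nu>(\<rho>-1)))^(1/Q)\<close>.\<close>

lemma poly_hjb:
  assumes \<nu>: "0 < \<nu>" and \<rho>: "1 < \<rho>" and p: "0 < p"
  shows "poly_value_deriv \<nu> \<rho> p * (w - \<alpha>) \<le> p + \<nu> * max 0 (w - \<alpha>) powr \<rho>"
proof (cases "w - \<alpha> \<le> 0")
  case True
  have "poly_value_deriv \<nu> \<rho> p \<ge> 0" unfolding poly_value_deriv_def using \<nu> \<rho> by simp
  then have "poly_value_deriv \<nu> \<rho> p * (w - \<alpha>) \<le> 0" using True by (simp add: mult_nonneg_nonpos)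
  then show ?thesis using p \<nu> by (smt (verit) mult_nonneg_nonneg powr_ge_zero)
next
  case False
  define z where "z = w - \<alpha>"
  define K where "K = \<nu> * (\<rho> - 1)"
  define Q where "Q = \<rho> / (\<rho> - 1)"
  define b where "b = (p / K) powr (1 / Q)"
  have z: "0 < z" using False unfolding z_def by simp
  have K: "0 < K" unfolding K_def using \<nu> \<rho> by simp
  have Q: "1 < Q" "1 / \<rho> + 1 / Q = 1" unfolding Q_def using \<rho> by (auto simp: field_simps)
  have bQ: "b powr Q = p / K" unfolding b_def powr_powr using Q p K by simp
  have "z * b \<le> z powr \<rho> / \<rho> + b powr Q / Q"
    by (rule Youngs_inequality) (use \<rho> Q z in \<open>auto simp: b_def\<close>)
  then have "\<nu> * \<rho> * (z * b) \<le> \<nu> * \<rho> * (z powr \<rho> / \<rho> + (p / K) / Q)"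
    using \<nu> \<rho> bQ by (intro mult_left_mono) auto
  also have "\<dots> = \<nu> * z powr \<rho> + p"
    unfolding Q_def K_def using \<nu> \<rho> by (simp add: field_simps)
  finally show ?thesis
    using z unfolding poly_value_deriv_def z_def[symmetric] b_def K_def Q_def by (simp add: mult_ac)
qed

lemma poly_hjb_subsolution:
  assumes \<nu>: "0 < \<nu>" and \<rho>: "1 < \<rho>"
  shows "hjb_subsolution \<alpha> (\<lambda>w. \<nu> * max 0 (w - \<alpha>) powr \<rho>) (poly_value \<nu> \<rho>) (poly_value_deriv \<nu> \<rho>)"
proof
  show "continuous_on {0..} (poly_value \<nu> \<rho>)"
    unfolding continuous_on_eq_continuous_within
    using poly_value_has_derivative_within(1)[OF \<nu> \<rho>] DERIV_continuous by (metis atLeast_iff)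
  have "continuous_on UNIV (\<lambda>w. \<nu> * max 0 (w - \<alpha>) powr \<rho>)"
    using \<rho> by (intro continuous_on_mult_left continuous_on_powr' continuous_intros) auto
  then show "(\<lambda>w. \<nu> * max 0 (w - \<alpha>) powr \<rho>) \<in> borel_measurable borel"
    by (rule borel_measurable_continuous_onI)
qed (use poly_value_has_derivative_within(2)[OF \<nu> \<rho>] poly_hjb[OF \<nu> \<rho>] \<nu> in auto)

lemma poly_value_le_fluid_cost:
  assumes \<nu>: "0 < \<nu>" and \<rho>: "1 < \<rho>" and adm: "fluid_admissible \<alpha> x0 u"
  shows "ennreal (poly_value \<nu> \<rho> x0) \<le> fluid_cost (poly_cost \<nu> \<rho> \<alpha>) \<alpha> x0 u"
  using hjb_subsolution.cost_ge_decrease[OF poly_hjb_subsolution[OF \<nu> \<rho>] adm]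
  by (simp add: poly_cost_eq poly_value_0)

text \<open>Along the feedback the HJB inequality is an equality with running cost
  \<open>\<rho>/(\<rho>-1) x\<close>.\<close>

lemma poly_cost_feedback:
  assumes \<nu>: "0 < \<nu>" and \<rho>: "1 < \<rho>" and p: "0 \<le> p"
  shows "poly_cost \<nu> \<rho> \<alpha> p (poly_feedback \<nu> \<rho> \<alpha> p) = \<rho> / (\<rho> - 1) * p"
proof -
  have "((p / (\<nu> * (\<rho> - 1))) powr (1/\<rho>)) powr \<rho> = p / (\<nu> * (\<rho> - 1))"
    unfolding powr_powr using \<nu> \<rho> p by simp
  then show ?thesis
    unfolding poly_cost_def poly_feedback_def using \<nu> \<rho> by (simp add: field_simps)
qed

lemma poly_value_deriv_feedback:
  assumes \<nu>: "0 < \<nu>" and \<rho>: "1 < \<rho>" and p: "0 \<le> p"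
  shows "poly_value_deriv \<nu> \<rho> p * (\<alpha> - poly_feedback \<nu> \<rho> \<alpha> p) = - (\<rho> / (\<rho> - 1) * p)"
proof -
  define y where "y = p / (\<nu> * (\<rho> - 1))"
  have "y powr ((\<rho> - 1) / \<rho>) * y powr (1/\<rho>) = y"
    unfolding powr_add[symmetric] using \<rho> p \<nu> by (simp add: y_def add_divide_distrib[symmetric])
  then show ?thesis
    unfolding poly_value_deriv_def poly_feedback_def y_def[symmetric]
    using \<nu> \<rho> by (simp add: y_def field_simps)
qed

lemma poly_feedback_integral:
  assumes \<nu>: "0 < \<nu>" and \<rho>: "1 < \<rho>" and adm: "fluid_admissible \<alpha> x0 u"
    and feedback: "\<And>t. 0 \<le> t \<Longrightarrow> u t = poly_feedback \<nu> \<rho> \<alpha> (fluid_state \<alpha> x0 u t)"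
    and T: "0 \<le> T"
  shows "((\<lambda>t. \<rho> / (\<rho> - 1) * fluid_state \<alpha> x0 u t) has_integral
           (poly_value \<nu> \<rho> x0 - poly_value \<nu> \<rho> (fluid_state \<alpha> x0 u T))) {0..T}"
proof -
  define x where "x = fluid_state \<alpha> x0 u"
  have x_nonneg: "\<And>t. 0 \<le> t \<Longrightarrow> 0 \<le> x t"
    using fluid_admissible_state_nonneg[OF adm] unfolding x_def .
  have x_cont: "continuous_on {0..T} x"
    unfolding x_def by (rule continuous_on_fluid_state_Icc[OF adm T])
  have "continuous_on {0..T} (\<lambda>t. (x t / (\<nu> * (\<rho> - 1))) powr (1/\<rho>))"
  proof (rule continuous_on_powr'[OF _ continuous_on_const])
    show "continuous_on {0..T} (\<lambda>t. x t / (\<nu> * (\<rho> - 1)))"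
      using x_cont \<nu> \<rho> by (intro continuous_intros) auto
  qed (use x_nonneg \<nu> \<rho> in auto)
  then have "continuous_on {0..T} (\<lambda>t. poly_feedback \<nu> \<rho> \<alpha> (x t))"
    unfolding poly_feedback_def by (rule continuous_on_add[OF _ continuous_on_const])
  then have u_cont: "continuous_on {0..T} u"
    by (rule continuous_on_cong[THEN iffD1, rotated 2]) (auto simp: feedback x_def)
  have "((poly_value \<nu> \<rho> \<circ> x) has_vector_derivative - (\<rho> / (\<rho> - 1) * x t)) (at t within {0..T})"
    if t: "t \<in> {0..T}" for t
  proof -
    have t0: "0 \<le> t" using t by simp
    have "x ` {0..T} \<subseteq> {0..}" using x_nonneg by (simp add: image_subset_iff)
    with poly_value_has_derivative_within(1)[OF \<nu> \<rho> x_nonneg[OF t0]]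
    have "(poly_value \<nu> \<rho> has_real_derivative poly_value_deriv \<nu> \<rho> (x t)) (at (x t) within x ` {0..T})"
      by (rule DERIV_subset)
    from DERIV_image_chain[OF this fluid_state_has_derivative_within[OF adm u_cont t, folded x_def]]
    have "((poly_value \<nu> \<rho> \<circ> x) has_real_derivative
        poly_value_deriv \<nu> \<rho> (x t) * (\<alpha> - u t)) (at t within {0..T})" .
    also have "poly_value_deriv \<nu> \<rho> (x t) * (\<alpha> - u t) = - (\<rho> / (\<rho> - 1) * x t)"
      using poly_value_deriv_feedback[OF \<nu> \<rho> x_nonneg[OF t0], of \<alpha>] feedback[OF t0]
      unfolding x_def by simp
    finally show ?thesis by (simp only: has_real_derivative_iff_has_vector_derivative)
  qed
  from has_integral_neg[OF fundamental_theorem_of_calculus[OF T this]]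
  show ?thesis by (simp add: x_def)
qed

lemma poly_feedback_cost_le:
  assumes \<nu>: "0 < \<nu>" and \<rho>: "1 < \<rho>" and adm: "fluid_admissible \<alpha> x0 u"
    and feedback: "\<And>t. 0 \<le> t \<Longrightarrow> u t = poly_feedback \<nu> \<rho> \<alpha> (fluid_state \<alpha> x0 u t)"
  shows "fluid_cost (poly_cost \<nu> \<rho> \<alpha>) \<alpha> x0 u \<le> ennreal (poly_value \<nu> \<rho> x0)"
proof -
  define f where "f = (\<lambda>t. \<rho> / (\<rho> - 1) * fluid_state \<alpha> x0 u (max 0 t))"
  have f_nonneg: "0 \<le> f t" for t
    unfolding f_def using \<rho> fluid_admissible_state_nonneg[OF adm, of "max 0 t"] by simp
  have [measurable]: "f \<in> borel_measurable borel"
    unfolding f_def using borel_measurable_fluid_state_extended[OF adm] by simp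
  have "fluid_cost (poly_cost \<nu> \<rho> \<alpha>) \<alpha> x0 u = (\<integral>\<^sup>+t\<in>{0..}. ennreal (f t) \<partial>lborel)"
    unfolding fluid_cost_def f_def
    using feedback poly_cost_feedback[OF \<nu> \<rho>] fluid_admissible_state_nonneg[OF adm]
    by (intro nn_integral_cong) (simp add: indicator_def)
  also have "\<dots> \<le> ennreal (poly_value \<nu> \<rho> x0)"
  proof (rule nn_integral_halfline_le_if_bounded)
    show "(\<lambda>t. ennreal (f t)) \<in> borel_measurable lborel" by measurable
  next
    fix T :: real assume T: "0 \<le> T"
    have "(f has_integral (poly_value \<nu> \<rho> x0 - poly_value \<nu> \<rho> (fluid_state \<alpha> x0 u T))) {0..T}"
      using poly_feedback_integral[OF \<nu> \<rho> adm feedback T]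
      by (rule has_integral_cong[THEN iffD1, rotated]) (auto simp: f_def)
    then have "((\<lambda>t. if t \<in> {0..T} then f t else 0) has_integral
        (poly_value \<nu> \<rho> x0 - poly_value \<nu> \<rho> (fluid_state \<alpha> x0 u T))) UNIV"
      by (simp only: has_integral_restrict_UNIV)
    then have "(\<integral>\<^sup>+t. ennreal (if t \<in> {0..T} then f t else 0) \<partial>lborel)
        = ennreal (poly_value \<nu> \<rho> x0 - poly_value \<nu> \<rho> (fluid_state \<alpha> x0 u T))"
      by (rule nn_integral_has_integral_lborel[rotated 2]) (auto simp: f_nonneg)
    moreover have "(\<integral>\<^sup>+t. ennreal (f t) * indicator {0..T} t \<partial>lborel)
        = (\<integral>\<^sup>+t. ennreal (if t \<in> {0..T} then f t else 0) \<partial>lborel)"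
      by (intro nn_integral_cong) (simp add: indicator_def)
    ultimately show "(\<integral>\<^sup>+t. ennreal (f t) * indicator {0..T} t \<partial>lborel) \<le> ennreal (poly_value \<nu> \<rho> x0)"
      using poly_value_nonneg[OF \<nu> \<rho>, of "fluid_state \<alpha> x0 u T"] by (simp add: ennreal_leI)
  qed
  finally show ?thesis .
qed

text \<open>In the closed loop \<open>x(t)^q\<close> with \<open>q = (\<rho>-1)/\<rho>\<close> decreases linearly until the queue is
  empty, so \<open>x(t) = ((x\<^sub>0^q - k t)\<^sub>+)^(1/q)\<close>.\<close>

lemma poly_feedback_exists:
  assumes \<alpha>: "0 < \<alpha>" and \<nu>: "0 < \<nu>" and \<rho>: "1 < \<rho>" and x0: "0 \<le> x0"
  obtains u where "fluid_admissible \<alpha> x0 u"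
    "\<And>t. 0 \<le> t \<Longrightarrow> u t = poly_feedback \<nu> \<rho> \<alpha> (fluid_state \<alpha> x0 u t)"
proof -
  define K where "K = \<nu> * (\<rho> - 1)"
  define q where "q = (\<rho> - 1) / \<rho>"
  define M where "M = \<rho> / (\<rho> - 1)"
  define a where "a = x0 powr q"
  define k where "k = q / K powr (1/\<rho>)"
  have K: "0 < K" unfolding K_def using \<nu> \<rho> by simp
  have k: "0 < k" unfolding k_def q_def using K \<rho> by simp
  have M: "1 < M" "M * q = 1" "M / \<rho> = M - 1"
    unfolding M_def q_def using \<rho> by (auto simp: field_simps)
  define X where "X = (\<lambda>t. max 0 (a - k * t) powr M)"
  define U where "U = (\<lambda>t. poly_feedback \<nu> \<rho> \<alpha> (X t))"
  have X_cont: "continuous_on UNIV X"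
    unfolding X_def using M by (intro continuous_on_powr' continuous_intros) auto
  have U_cont: "continuous_on UNIV U"
    unfolding U_def poly_feedback_def K_def[symmetric]
    using K \<rho> X_cont by (intro continuous_intros continuous_on_powr') (auto simp: X_def)
  have X_if: "X = (\<lambda>t. if t \<le> a / k then (a - k * t) powr M else 0)"
    using k M by (auto simp: X_def fun_eq_iff field_simps max_def)
  have X_deriv: "(X has_real_derivative (\<alpha> - U t)) (at t)" if "t \<notin> {a / k}" for t
    unfolding X_if
  proof (rule DERIV_if_le_off)
    assume t: "t < a / k"
    then have pos: "0 < a - k * t" using k by (simp add: field_simps)
    have "(X t / K) powr (1/\<rho>) = (a - k * t) powr (M - 1) / K powr (1/\<rho>)"
      using pos t K by (simp add: X_if powr_divide powr_powr M(3))
    then have "\<alpha> - U t = - ((a - k * t) powr (M - 1) * (1 / K powr (1/\<rho>)))"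
      unfolding U_def poly_feedback_def K_def[symmetric] by simp
    also have "1 / K powr (1/\<rho>) = M * k" unfolding k_def using M(2) by (simp add: field_simps)
    finally have "M * (a - k * t) powr (M - 1) * (- k) = \<alpha> - U t" by (simp add: mult_ac)
    then show "((\<lambda>t. (a - k * t) powr M) has_real_derivative (\<alpha> - U t)) (at t)"
      using DERIV_fun_powr[OF DERIV_diff[OF DERIV_const DERIV_cmult_Id[of k]] pos, of M] by simp
  next
    assume "a / k < t"
    then have "X t = 0" unfolding X_if by simp
    then show "((\<lambda>t. 0) has_real_derivative (\<alpha> - U t)) (at t)"
      unfolding U_def poly_feedback_def using \<rho> by simp
  qed (use that in simp)
  have X0: "X 0 = x0" unfolding X_def a_def using x0 M(2) by (simp add: powr_powr mult.commute)
  have U_nonneg: "0 \<le> U t" for t unfolding U_def poly_feedback_def using \<alpha> by simp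
  have X_nonneg: "0 \<le> X t" for t unfolding X_def by simp
  have "fluid_admissible \<alpha> x0 U" "\<And>t. 0 \<le> t \<Longrightarrow> fluid_state \<alpha> x0 U t = X t"
    using fluid_admissible_of_trajectory[of X U "{a / k}" \<alpha> x0] X_cont U_cont X_deriv X0 U_nonneg X_nonneg
    by auto
  then show ?thesis by (intro that) (auto simp: U_def)
qed

lemma fluid_value_poly_cost:
  assumes \<alpha>: "0 < \<alpha>" and \<nu>: "0 < \<nu>" and \<rho>: "1 < \<rho>" and x0: "0 \<le> x0"
  shows "fluid_value (poly_cost \<nu> \<rho> \<alpha>) \<alpha> x0 = ennreal (poly_value \<nu> \<rho> x0)"
proof -
  obtain u where "fluid_admissible \<alpha> x0 u"
    "\<And>t. 0 \<le> t \<Longrightarrow> u t = poly_feedback \<nu> \<rho> \<alpha> (fluid_state \<alpha> x0 u t)"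
    using poly_feedback_exists[OF \<alpha> \<nu> \<rho> x0] by blast
  then show ?thesis
    unfolding fluid_value_def using poly_feedback_cost_le[OF \<nu> \<rho>] poly_value_le_fluid_cost[OF \<nu> \<rho>]
    by (intro antisym INF_lower2[of u] INF_greatest) auto
qed

lemma poly_feedback_optimal:
  assumes \<alpha>: "0 < \<alpha>" and \<nu>: "0 < \<nu>" and \<rho>: "1 < \<rho>" and x0: "0 \<le> x0"
    and adm: "fluid_admissible \<alpha> x0 u"
    and feedback: "\<And>t. 0 \<le> t \<Longrightarrow> u t = poly_feedback \<nu> \<rho> \<alpha> (fluid_state \<alpha> x0 u t)"
  shows "fluid_cost (poly_cost \<nu> \<rho> \<alpha>) \<alpha> x0 u = fluid_value (poly_cost \<nu> \<rho> \<alpha>) \<alpha> x0"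
  unfolding fluid_value_poly_cost[OF \<alpha> \<nu> \<rho> x0]
  using poly_feedback_cost_le[OF \<nu> \<rho> adm feedback] poly_value_le_fluid_cost[OF \<nu> \<rho> adm]
  by (rule antisym)

section \<open>Exponential cost\<close>

text \<open>A subsolution of the HJB equation for the exponential cost: with \<open>\<beta> = \<nu> e^(\<kappa>\<alpha>)\<close> and
  \<open>y = p - \<beta>\<close>, it vanishes for \<open>y \<le> 0\<close>, is the quadratic \<open>\<kappa> y\<^sup>2/4\<close> up to \<open>y = \<beta> e\<^sup>2\<close>,
  and beyond that follows the asymptotics \<open>\<kappa> y\<^sup>2/(2 (ln y - ln \<beta> - 1))\<close>, shifted so that the
  pieces join at \<open>y = \<beta> e\<^sup>2\<close>, where the logarithmic denominator equals \<open>1\<close>.\<close>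

definition exp_value_quad :: "real \<Rightarrow> real \<Rightarrow> real \<Rightarrow> real" where
  "exp_value_quad \<kappa> \<beta> p = \<kappa> * (p - \<beta>)^2 / 4"

definition exp_value_log :: "real \<Rightarrow> real \<Rightarrow> real \<Rightarrow> real" where
  "exp_value_log \<kappa> \<beta> p = \<kappa> / 2 * ((p - \<beta>)^2 / (ln (p - \<beta>) - ln \<beta> - 1)) - \<kappa> * (\<beta> * exp 2)^2 / 4"

definition exp_value :: "real \<Rightarrow> real \<Rightarrow> real \<Rightarrow> real" where
  "exp_value \<kappa> \<beta> p = (if p \<le> \<beta> + \<beta> * exp 2 then (if p \<le> \<beta> then 0 else exp_value_quad \<kappa> \<beta> p)
     else exp_value_log \<kappa> \<beta> p)"

definition exp_slope :: "real \<Rightarrow> real \<Rightarrow> real" where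
  "exp_slope \<beta> p = (if p \<le> \<beta> + \<beta> * exp 2 then (if p \<le> \<beta> then 0 else (p - \<beta>) / 2)
     else (p - \<beta>) / (ln (p - \<beta>) - ln \<beta> - 1) - (p - \<beta>) / (2 * (ln (p - \<beta>) - ln \<beta> - 1)^2))"

lemma exp_value_log_has_derivative:
  assumes y: "0 < p - \<beta>" and D: "ln (p - \<beta>) - ln \<beta> - 1 \<noteq> 0"
  shows "(exp_value_log \<kappa> \<beta> has_real_derivative
     \<kappa> * ((p - \<beta>) / (ln (p - \<beta>) - ln \<beta> - 1) - (p - \<beta>) / (2 * (ln (p - \<beta>) - ln \<beta> - 1)^2))) (at p)"
proof -
  define y where "y = p - \<beta>"
  define D where "D = ln (p - \<beta>) - ln \<beta> - 1"
  have "((\<lambda>p. (p - \<beta>)^2) has_real_derivative 2 * y) (at p)"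
    unfolding y_def by (auto intro!: derivative_eq_intros)
  moreover have "((\<lambda>p. ln (p - \<beta>) - ln \<beta> - 1) has_real_derivative 1 / y) (at p)"
    unfolding y_def using y by (auto intro!: derivative_eq_intros)
  ultimately have "((\<lambda>p. (p - \<beta>)^2 / (ln (p - \<beta>) - ln \<beta> - 1)) has_real_derivative
      (2 * y * D - y^2 * (1 / y)) / (D * D)) (at p)"
    using DERIV_divide D unfolding D_def y_def by blast
  then have "(exp_value_log \<kappa> \<beta> has_real_derivative \<kappa> / 2 * ((2 * y * D - y^2 * (1 / y)) / (D * D)) - 0) (at p)"
    unfolding exp_value_log_def by (intro DERIV_diff DERIV_cmult DERIV_const)
  moreover have "\<kappa> / 2 * ((2 * y * D - y^2 * (1 / y)) / (D * D)) - 0 = \<kappa> * (y / D - y / (2 * D^2))"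
  proof -
    have "0 < y" "D \<noteq> 0" using y D unfolding y_def D_def by simp_all
    then show ?thesis by (simp add: field_simps power2_eq_square)
  qed
  ultimately show ?thesis unfolding y_def D_def by simp
qed

lemma exp_value_has_derivative:
  assumes \<beta>: "0 < \<beta>"
  shows "(exp_value \<kappa> \<beta> has_real_derivative \<kappa> * exp_slope \<beta> p) (at p)"
proof -
  define c where "c = \<beta> + \<beta> * exp 2"
  have c: "\<beta> < c" "ln (c - \<beta>) - ln \<beta> - 1 = 1" unfolding c_def using \<beta> by (auto simp: ln_mult)
  have quad: "((\<lambda>p. if p \<le> \<beta> then 0 else exp_value_quad \<kappa> \<beta> p) has_real_derivative
      (if p \<le> \<beta> then 0 else \<kappa> * (p - \<beta>) / 2)) (at p)" for p
    by (rule DERIV_if_le) (auto intro!: derivative_eq_intros simp: exp_value_quad_def)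
  have log: "(exp_value_log \<kappa> \<beta> has_real_derivative
     \<kappa> * ((p - \<beta>) / (ln (p - \<beta>) - ln \<beta> - 1) - (p - \<beta>) / (2 * (ln (p - \<beta>) - ln \<beta> - 1)^2))) (at p)"
    if p: "c \<le> p" for p
  proof (rule exp_value_log_has_derivative)
    have "ln (c - \<beta>) \<le> ln (p - \<beta>)" using p c by simp
    then show "ln (p - \<beta>) - ln \<beta> - 1 \<noteq> 0" using c by simp
  qed (use p c in simp)
  have "exp_value \<kappa> \<beta> = (\<lambda>p. if p \<le> c then (if p \<le> \<beta> then 0 else exp_value_quad \<kappa> \<beta> p)
      else exp_value_log \<kappa> \<beta> p)"
    by (simp add: fun_eq_iff exp_value_def c_def)
  moreover have "\<kappa> * exp_slope \<beta> p = (if p \<le> c then (if p \<le> \<beta> then 0 else \<kappa> * (p - \<beta>) / 2) else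
       \<kappa> * ((p - \<beta>) / (ln (p - \<beta>) - ln \<beta> - 1) - (p - \<beta>) / (2 * (ln (p - \<beta>) - ln \<beta> - 1)^2)))"
    by (simp add: exp_slope_def c_def)
  ultimately show ?thesis
    using c by (simp only:) (rule DERIV_if_le[OF quad log];
        simp add: exp_value_quad_def exp_value_log_def c_def field_simps power2_eq_square)
qed

text \<open>The Legendre transform of \<open>s \<mapsto> \<beta> (e\<^sup>s - 1)\<close> at slope \<open>q > \<beta>\<close> is
  \<open>q (ln (q/\<beta>) - 1) + \<beta>\<close>, attained at \<open>s = ln (q/\<beta>)\<close>.\<close>

lemma mult_le_exp_conjugate:
  fixes \<beta> q p s :: real
  assumes \<beta>: "0 < \<beta>" and p: "0 \<le> p" and s: "0 \<le> s"
    and slope: "q \<le> \<beta> \<or> q * (ln (q / \<beta>) - 1) \<le> p - \<beta>"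
  shows "q * s \<le> p + \<beta> * (exp s - 1)"
proof (cases "q \<le> \<beta>")
  case True
  have "q * s \<le> \<beta> * s" using True s by (rule mult_right_mono)
  also have "\<dots> \<le> \<beta> * (exp s - 1)"
    using \<beta> exp_ge_add_one_self[of s] by (intro mult_left_mono) linarith+
  finally show ?thesis using p by simp
next
  case False
  define c where "c = ln (q / \<beta>)"
  have ec: "\<beta> * exp c = q" unfolding c_def using False \<beta> by simp
  have "q * (1 + (s - c)) = \<beta> * exp c * (1 + (s - c))" by (simp only: ec)
  also have "\<dots> \<le> \<beta> * exp c * exp (s - c)"
    using \<beta> exp_ge_add_one_self[of "s - c"] by (intro mult_left_mono) auto
  also have "\<dots> = \<beta> * exp s" by (simp add: mult.assoc exp_add[symmetric])
  finally have "q * (1 + (s - c)) \<le> \<beta> * exp s" .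
  moreover have "q * (c - 1) \<le> p - \<beta>" using False slope unfolding c_def by simp
  ultimately show ?thesis by (simp add: algebra_simps)
qed
lemma exp_slope_log_bound:
  fixes \<beta> y :: real
  assumes \<beta>: "0 < \<beta>" and y: "\<beta> * exp 2 < y"
  defines "D \<equiv> ln y - ln \<beta> - 1"
  defines "q \<equiv> y / D - y / (2 * D^2)"
  shows "0 \<le> q" "q \<le> \<beta> \<or> q * (ln (q / \<beta>) - 1) \<le> y"
proof -
  have "0 < \<beta> * exp 2" using \<beta> by simp
  then have y0: "0 < y" using y by linarith
  have "ln (\<beta> * exp 2) < ln y" using y \<open>0 < \<beta> * exp 2\<close> by simp
  then have D: "1 < D" unfolding D_def using \<beta> by (simp add: ln_mult)
  have "y / (2 * D^2) \<le> y / D"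
    using y0 D by (intro divide_left_mono) (auto simp: power2_eq_square)
  then show "0 \<le> q" unfolding q_def by simp
  have q_le: "q \<le> y / D" unfolding q_def using y0 D by simp
  show "q \<le> \<beta> \<or> q * (ln (q / \<beta>) - 1) \<le> y"
  proof (cases "q \<le> \<beta>")
    case False
    then have q: "0 < q" using \<beta> by simp
    have "q / \<beta> \<le> y / D / \<beta>" using q_le \<beta> by (intro divide_right_mono) auto
    then have "q / \<beta> \<le> y / (D * \<beta>)" by simp
    then have "ln (q / \<beta>) \<le> ln (y / (D * \<beta>))" using q \<beta> by (intro ln_mono) auto
    also have "\<dots> = ln y - ln D - ln \<beta>" using y0 D \<beta> by (simp add: ln_div ln_mult)
    finally have "ln (q / \<beta>) - 1 \<le> D - ln D" unfolding D_def by simp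
    then have "q * (ln (q / \<beta>) - 1) \<le> q * (D - ln D)" using q by (intro mult_left_mono) auto
    also have "\<dots> \<le> y / D * (D - ln D)"
      using q_le ln_le_minus_one[of D] D by (intro mult_right_mono) auto
    also have "\<dots> = y - y * ln D / D" using D by (simp add: field_simps)
    also have "\<dots> \<le> y" using y0 D by simp
    finally show ?thesis by simp
  qed simp
qed

lemma exp_slope_bound:
  assumes \<beta>: "0 < \<beta>"
  shows "0 \<le> exp_slope \<beta> p"
    "exp_slope \<beta> p \<le> \<beta> \<or> exp_slope \<beta> p * (ln (exp_slope \<beta> p / \<beta>) - 1) \<le> p - \<beta>"
proof -
  consider "p \<le> \<beta>" | "\<beta> < p" "p \<le> \<beta> + \<beta> * exp 2" | "\<beta> + \<beta> * exp 2 < p" by linarith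
  then have "0 \<le> exp_slope \<beta> p \<and>
      (exp_slope \<beta> p \<le> \<beta> \<or> exp_slope \<beta> p * (ln (exp_slope \<beta> p / \<beta>) - 1) \<le> p - \<beta>)"
  proof cases
    case 1
    moreover have "0 < \<beta> * exp 2" using \<beta> by simp
    ultimately have "p \<le> \<beta> + \<beta> * exp 2" by linarith
    with 1 show ?thesis unfolding exp_slope_def using \<beta> by simp
  next
    case 2
    then have q: "exp_slope \<beta> p = (p - \<beta>) / 2" unfolding exp_slope_def by simp
    have "(p - \<beta>) / 2 * (ln ((p - \<beta>) / 2 / \<beta>) - 1) \<le> p - \<beta>" if "\<beta> < (p - \<beta>) / 2"
    proof -
      have "ln ((p - \<beta>) / 2 / \<beta>) \<le> ln (exp 2)"
        using 2 that \<beta> by (subst ln_le_cancel_iff) (auto simp: field_simps)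
      then have "ln ((p - \<beta>) / 2 / \<beta>) - 1 \<le> 1" by simp
      then have "(p - \<beta>) / 2 * (ln ((p - \<beta>) / 2 / \<beta>) - 1) \<le> (p - \<beta>) / 2"
        using 2 by (intro mult_left_le) auto
      also have "\<dots> \<le> p - \<beta>" using 2(1) by simp
      finally show ?thesis .
    qed
    then show ?thesis unfolding q using 2 by force
  next
    case 3
    then have "exp_slope \<beta> p = (p - \<beta>) / (ln (p - \<beta>) - ln \<beta> - 1)
        - (p - \<beta>) / (2 * (ln (p - \<beta>) - ln \<beta> - 1)^2)"
      unfolding exp_slope_def by simp
    moreover have "\<beta> * exp 2 < p - \<beta>" using 3 by simp
    ultimately show ?thesis using exp_slope_log_bound[OF \<beta>, of "p - \<beta>"] by simp
  qed
  then show "0 \<le> exp_slope \<beta> p"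
    "exp_slope \<beta> p \<le> \<beta> \<or> exp_slope \<beta> p * (ln (exp_slope \<beta> p / \<beta>) - 1) \<le> p - \<beta>" by auto
qed

lemma exp_hjb:
  assumes \<nu>: "0 < \<nu>" and \<kappa>: "0 < \<kappa>" and p: "0 < p"
  shows "\<kappa> * exp_slope (\<nu> * exp (\<kappa> * \<alpha>)) p * (w - \<alpha>)
    \<le> p + \<nu> * max 0 (exp (\<kappa> * w) - exp (\<kappa> * \<alpha>))"
proof -
  define \<beta> where "\<beta> = \<nu> * exp (\<kappa> * \<alpha>)"
  define q where "q = exp_slope \<beta> p"
  have \<beta>: "0 < \<beta>" unfolding \<beta>_def using \<nu> by simp
  note q = exp_slope_bound[OF \<beta>, of p, folded q_def]
  show ?thesis
  proof (cases "w \<le> \<alpha>")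
    case True
    then have "\<kappa> * q * (w - \<alpha>) \<le> 0" using q(1) \<kappa> by (simp add: mult_nonneg_nonpos)
    then show ?thesis using \<nu> p unfolding q_def \<beta>_def by (smt (verit) max.cobounded1 mult_nonneg_nonneg)
  next
    case False
    have "exp (\<kappa> * w) - exp (\<kappa> * \<alpha>) = exp (\<kappa> * \<alpha>) * (exp (\<kappa> * (w - \<alpha>)) - 1)"
      by (simp add: exp_add[symmetric] algebra_simps)
    moreover have "0 \<le> exp (\<kappa> * (w - \<alpha>)) - 1" using False \<kappa> by simp
    ultimately have "\<nu> * max 0 (exp (\<kappa> * w) - exp (\<kappa> * \<alpha>)) = \<beta> * (exp (\<kappa> * (w - \<alpha>)) - 1)"
      unfolding \<beta>_def by simp
    moreover have "q * (\<kappa> * (w - \<alpha>)) \<le> p + \<beta> * (exp (\<kappa> * (w - \<alpha>)) - 1)"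
      using False \<kappa> p by (intro mult_le_exp_conjugate \<beta> q(2)) auto
    ultimately have "\<kappa> * q * (w - \<alpha>) \<le> p + \<nu> * max 0 (exp (\<kappa> * w) - exp (\<kappa> * \<alpha>))"
      by (simp add: mult_ac)
    then show ?thesis unfolding q_def \<beta>_def .
  qed
qed

lemma exp_cost_eq: "exp_cost \<nu> \<kappa> \<alpha> = (\<lambda>x w. x + \<nu> * max 0 (exp (\<kappa> * w) - exp (\<kappa> * \<alpha>)))"
  by (simp add: fun_eq_iff exp_cost_def)

lemma exp_hjb_subsolution:
  assumes \<nu>: "0 < \<nu>" and \<kappa>: "0 < \<kappa>"
  shows "hjb_subsolution \<alpha> (\<lambda>w. \<nu> * max 0 (exp (\<kappa> * w) - exp (\<kappa> * \<alpha>)))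
    (exp_value \<kappa> (\<nu> * exp (\<kappa> * \<alpha>))) (\<lambda>p. \<kappa> * exp_slope (\<nu> * exp (\<kappa> * \<alpha>)) p)"
proof
  have \<beta>: "0 < \<nu> * exp (\<kappa> * \<alpha>)" using \<nu> by simp
  show "continuous_on {0..} (exp_value \<kappa> (\<nu> * exp (\<kappa> * \<alpha>)))"
    using exp_value_has_derivative[OF \<beta>] DERIV_isCont by (blast intro: continuous_at_imp_continuous_on)
  show "\<And>p. (exp_value \<kappa> (\<nu> * exp (\<kappa> * \<alpha>)) has_real_derivative \<kappa> * exp_slope (\<nu> * exp (\<kappa> * \<alpha>)) p) (at p)"
    by (rule exp_value_has_derivative[OF \<beta>])
  show "(\<lambda>w. \<nu> * max 0 (exp (\<kappa> * w) - exp (\<kappa> * \<alpha>))) \<in> borel_measurable borel"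
    by (intro borel_measurable_continuous_onI continuous_intros)
qed (use exp_hjb[OF \<nu> \<kappa>] \<nu> in auto)

lemma exp_value_le_fluid_cost:
  assumes \<nu>: "0 < \<nu>" and \<kappa>: "0 < \<kappa>" and adm: "fluid_admissible \<alpha> x0 u"
  shows "ennreal (exp_value \<kappa> (\<nu> * exp (\<kappa> * \<alpha>)) x0) \<le> fluid_cost (exp_cost \<nu> \<kappa> \<alpha>) \<alpha> x0 u"
proof -
  have "exp_value \<kappa> (\<nu> * exp (\<kappa> * \<alpha>)) 0 = 0" using \<nu> by (simp add: exp_value_def)
  then show ?thesis
    using hjb_subsolution.cost_ge_decrease[OF exp_hjb_subsolution[OF \<nu> \<kappa>] adm]
    by (simp add: exp_cost_eq)
qed

text \<open>Draining the queue along \<open>x(t) = x\<^sub>0 (1 - t/T\<^sub>0)\<^sup>2\<close> with \<open>T\<^sub>0 = \<kappa> x\<^sub>0/4\<close> keeps the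
  excess rate below \<open>8/\<kappa>\<close>, hence the excess power below \<open>\<beta> (e\<^sup>8 - 1)\<close>.\<close>

lemma exp_drain_trajectory:
  assumes \<alpha>: "0 < \<alpha>" and \<kappa>: "0 < \<kappa>" and x0: "0 < x0"
  defines "T0 \<equiv> \<kappa> * x0 / 4"
  shows "fluid_admissible \<alpha> x0 (\<lambda>t. \<alpha> + 8 / \<kappa> * max 0 (1 - t / T0))"
    and "\<And>t. 0 \<le> t \<Longrightarrow>
      fluid_state \<alpha> x0 (\<lambda>t. \<alpha> + 8 / \<kappa> * max 0 (1 - t / T0)) t = x0 * (max 0 (1 - t / T0))^2"
proof -
  have T0: "0 < T0" unfolding T0_def using \<kappa> x0 by simp
  define X where "X = (\<lambda>t. x0 * (max 0 (1 - t / T0))^2)"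
  define U where "U = (\<lambda>t. \<alpha> + 8 / \<kappa> * max 0 (1 - t / T0))"
  have X_cont: "continuous_on UNIV X" and U_cont: "continuous_on UNIV U"
    unfolding X_def U_def using T0 \<kappa> by (auto intro!: continuous_intros)
  have X_if: "X = (\<lambda>t. if t \<le> T0 then x0 * (1 - t / T0)^2 else 0)"
    using T0 by (auto simp: X_def fun_eq_iff max_def field_simps)
  have X_deriv: "(X has_real_derivative (\<alpha> - U t)) (at t)" if "t \<notin> {T0}" for t
    unfolding X_if
  proof (rule DERIV_if_le_off)
    assume "t < T0"
    then have "\<alpha> - U t = x0 * (2 * (1 - t / T0) * (- 1 / T0))"
      using \<kappa> x0 unfolding U_def T0_def by (simp add: field_simps)
    then show "((\<lambda>t. x0 * (1 - t / T0)^2) has_real_derivative (\<alpha> - U t)) (at t)"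
      using T0 by (auto intro!: derivative_eq_intros)
  next
    assume "T0 < t"
    then show "((\<lambda>t. 0) has_real_derivative (\<alpha> - U t)) (at t)"
      using T0 by (simp add: U_def field_simps)
  qed (use that in simp)
  have "0 \<le> U t" for t unfolding U_def using \<alpha> \<kappa> by simp
  moreover have "0 \<le> X t" for t unfolding X_def using x0 by simp
  ultimately show "fluid_admissible \<alpha> x0 U" "\<And>t. 0 \<le> t \<Longrightarrow> fluid_state \<alpha> x0 U t = X t"
    using fluid_admissible_of_trajectory[of X U "{T0}" \<alpha> x0] X_cont U_cont X_deriv
    by (auto simp: X_def)
qed

lemma exp_fluid_value_le:
  assumes \<alpha>: "0 < \<alpha>" and \<nu>: "0 < \<nu>" and \<kappa>: "0 < \<kappa>" and x0: "0 < x0"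
  shows "fluid_value (exp_cost \<nu> \<kappa> \<alpha>) \<alpha> x0
    \<le> ennreal ((x0 + \<nu> * exp (\<kappa> * \<alpha>) * (exp 8 - 1)) * (\<kappa> * x0 / 4))"
proof -
  define T0 where "T0 = \<kappa> * x0 / 4"
  define C where "C = x0 + \<nu> * exp (\<kappa> * \<alpha>) * (exp 8 - 1)"
  define U where "U = (\<lambda>t. \<alpha> + 8 / \<kappa> * max 0 (1 - t / T0))"
  have T0: "0 < T0" unfolding T0_def using \<kappa> x0 by simp
  have U: "fluid_admissible \<alpha> x0 U" "\<And>t. 0 \<le> t \<Longrightarrow> fluid_state \<alpha> x0 U t = x0 * (max 0 (1 - t / T0))^2"
    unfolding U_def T0_def by (rule exp_drain_trajectory[OF \<alpha> \<kappa> x0])+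
  have running_cost: "ennreal (exp_cost \<nu> \<kappa> \<alpha> (fluid_state \<alpha> x0 U t) (U t)) * indicator {0..} t
      \<le> ennreal C * indicator {0..T0} t" for t
  proof (cases "0 \<le> t \<and> t \<le> T0")
    case True
    define m where "m = 1 - t / T0"
    have m: "0 \<le> m" "m \<le> 1" unfolding m_def using True T0 by (auto simp: field_simps)
    have "fluid_state \<alpha> x0 U t = x0 * m^2" using U(2)[of t] True m unfolding m_def by simp
    also have "\<dots> \<le> x0" using m x0 by (simp add: mult_left_le power_le_one)
    finally have "fluid_state \<alpha> x0 U t \<le> x0" .
    moreover have "exp (\<kappa> * U t) \<le> exp (\<kappa> * \<alpha>) * exp 8"
      unfolding U_def m_def[symmetric] using m \<kappa> by (simp add: exp_add[symmetric] algebra_simps)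
    then have "max 0 (exp (\<kappa> * U t) - exp (\<kappa> * \<alpha>)) \<le> exp (\<kappa> * \<alpha>) * (exp 8 - 1)"
      by (intro max.boundedI) (simp_all add: algebra_simps)
    then have "\<nu> * max 0 (exp (\<kappa> * U t) - exp (\<kappa> * \<alpha>)) \<le> \<nu> * exp (\<kappa> * \<alpha>) * (exp 8 - 1)"
      using \<nu> by (simp add: mult.assoc)
    ultimately have "exp_cost \<nu> \<kappa> \<alpha> (fluid_state \<alpha> x0 U t) (U t) \<le> C"
      unfolding exp_cost_def C_def by simp
    then show ?thesis using True by (simp add: ennreal_leI)
  next
    case False
    show ?thesis
    proof (cases "0 \<le> t")
      case True
      with False have "max 0 (1 - t / T0) = 0" using T0 by (simp add: field_simps)
      then have "fluid_state \<alpha> x0 U t = 0" "U t = \<alpha>" using U(2)[OF True] by (simp_all add: U_def)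
      then show ?thesis by (simp add: exp_cost_def)
    qed simp
  qed
  have "fluid_value (exp_cost \<nu> \<kappa> \<alpha>) \<alpha> x0 \<le> fluid_cost (exp_cost \<nu> \<kappa> \<alpha>) \<alpha> x0 U"
    unfolding fluid_value_def using U(1) by (intro INF_lower) auto
  also have "\<dots> \<le> (\<integral>\<^sup>+t. ennreal C * indicator {0..T0} t \<partial>lborel)"
    unfolding fluid_cost_def by (intro nn_integral_mono running_cost)
  also have "\<dots> = ennreal (C * T0)"
    using T0 x0 \<nu> by (simp add: nn_integral_cmult_indicator ennreal_mult C_def)
  finally show ?thesis unfolding C_def T0_def .
qed

lemma exp_fluid_value_le_quadratic:
  assumes \<alpha>: "0 < \<alpha>" and \<nu>: "0 < \<nu>" and \<kappa>: "0 < \<kappa>" and x0: "0 < x0"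
  defines "\<beta> \<equiv> \<nu> * exp (\<kappa> * \<alpha>)"
  shows "enn2ereal (fluid_value (exp_cost \<nu> \<kappa> \<alpha>) \<alpha> x0)
    \<le> ereal (\<kappa> / 16 * (4 * \<beta> + \<beta> * (exp 8 - 1))^2 + \<kappa> / 2 * (x0 - \<beta>)^2)"
proof -
  define c where "c = \<beta> * (exp 8 - 1)"
  define B where "B = (x0 + c) * (\<kappa> * x0 / 4)"
  have "0 \<le> c" unfolding c_def \<beta>_def using \<nu> by simp
  then have "0 \<le> B" unfolding B_def using x0 \<kappa> by simp
  moreover have "fluid_value (exp_cost \<nu> \<kappa> \<alpha>) \<alpha> x0 \<le> ennreal B"
    using exp_fluid_value_le[OF \<alpha> \<nu> \<kappa> x0] unfolding B_def c_def \<beta>_def by (simp add: mult.assoc)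
  ultimately have "enn2ereal (fluid_value (exp_cost \<nu> \<kappa> \<alpha>) \<alpha> x0) \<le> ereal B"
    by (simp add: less_eq_ennreal.rep_eq)
  also have "B \<le> \<kappa> / 16 * (4 * \<beta> + c)^2 + \<kappa> / 2 * (x0 - \<beta>)^2"
  proof -
    have "\<kappa> / 16 * (4 * \<beta> + c)^2 + \<kappa> / 2 * (x0 - \<beta>)^2 - B
        = \<kappa> / 4 * (x0 - (4 * \<beta> + c) / 2)^2 + \<kappa> * \<beta>^2 / 2"
      unfolding B_def by (simp add: power2_eq_square field_simps)
    moreover have "0 \<le> \<kappa> / 4 * (x0 - (4 * \<beta> + c) / 2)^2 + \<kappa> * \<beta>^2 / 2" using \<kappa> by simp
    ultimately show ?thesis by linarith
  qed
  finally show ?thesis unfolding c_def by simp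
qed

lemma exp_value_eq_log:
  assumes \<beta>: "0 < \<beta>" and p: "\<beta> + \<beta> * exp 2 \<le> p"
  shows "exp_value \<kappa> \<beta> p = exp_value_log \<kappa> \<beta> p"
proof (cases "p = \<beta> + \<beta> * exp 2")
  case True
  have "ln (\<beta> * exp 2) - ln \<beta> - 1 = 1" "0 < \<beta> * exp 2" using \<beta> by (simp_all add: ln_mult)
  then show ?thesis
    using True by (simp add: exp_value_def exp_value_quad_def exp_value_log_def)
qed (use p in \<open>simp add: exp_value_def\<close>)

lemma ereal_le_enn2ereal_ennreal: "ereal x \<le> enn2ereal (ennreal x)"
  by (cases "0 \<le> x") (auto simp: ennreal_neg intro: order_trans[OF _ enn2ereal_nonneg])

lemma exp_fluid_value_ge_log:
  fixes \<alpha> :: real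
  assumes \<nu>: "0 < \<nu>" and \<kappa>: "0 < \<kappa>"
  defines "\<beta> \<equiv> \<nu> * exp (\<kappa> * \<alpha>)"
  assumes x0: "\<beta> + \<beta> * exp 2 \<le> x0"
  shows "ereal (exp_value_log \<kappa> \<beta> x0) \<le> enn2ereal (fluid_value (exp_cost \<nu> \<kappa> \<alpha>) \<alpha> x0)"
proof -
  have "0 < \<beta>" unfolding \<beta>_def using \<nu> by simp
  have "ereal (exp_value_log \<kappa> \<beta> x0) \<le> enn2ereal (ennreal (exp_value \<kappa> \<beta> x0))"
    unfolding exp_value_eq_log[OF \<open>0 < \<beta>\<close> x0] by (rule ereal_le_enn2ereal_ennreal)
  also have "ennreal (exp_value \<kappa> \<beta> x0) \<le> fluid_value (exp_cost \<nu> \<kappa> \<alpha>) \<alpha> x0"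
    unfolding fluid_value_def \<beta>_def by (rule INF_greatest) (use exp_value_le_fluid_cost[OF \<nu> \<kappa>] in auto)
  then have "enn2ereal (ennreal (exp_value \<kappa> \<beta> x0)) \<le> enn2ereal (fluid_value (exp_cost \<nu> \<kappa> \<alpha>) \<alpha> x0)"
    by (simp add: less_eq_ennreal.rep_eq)
  finally show ?thesis .
qed

lemma exp_fluid_value_bounds:
  fixes \<alpha> \<nu> \<kappa> :: real
  assumes \<alpha>: "0 < \<alpha>" and \<nu>: "0 < \<nu>" and \<kappa>: "0 < \<kappa>"
  shows "\<exists>Cm Cp :: real. \<forall>x0. x0 \<ge> \<nu> * exp (\<kappa> * \<alpha>) * (exp 2 + 1) \<longrightarrow>
       (let xt = x0 - \<nu> * exp (\<kappa> * \<alpha>) in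
         ereal (Cm + (\<kappa> / 2) * (xt^2 / (ln xt - ln \<nu> - (\<kappa> * \<alpha> + 1))))
           \<le> enn2ereal (fluid_value (exp_cost \<nu> \<kappa> \<alpha>) \<alpha> x0)
         \<and> enn2ereal (fluid_value (exp_cost \<nu> \<kappa> \<alpha>) \<alpha> x0) \<le> ereal (Cp + (\<kappa> / 2) * xt^2))"
proof (intro exI allI impI)
  define \<beta> where "\<beta> = \<nu> * exp (\<kappa> * \<alpha>)"
  fix x0 :: real assume "\<nu> * exp (\<kappa> * \<alpha>) * (exp 2 + 1) \<le> x0"
  then have x0: "\<beta> + \<beta> * exp 2 \<le> x0" unfolding \<beta>_def by (simp add: algebra_simps)
  have "0 < \<beta> + \<beta> * exp 2" unfolding \<beta>_def using \<nu> by (simp add: add_pos_pos)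
  then have "0 < x0" using x0 by (rule order_less_le_trans)
  have "ln \<beta> = ln \<nu> + \<kappa> * \<alpha>" unfolding \<beta>_def using \<nu> by (simp add: ln_mult)
  then have "exp_value_log \<kappa> \<beta> x0 = - \<kappa> * (\<beta> * exp 2)^2 / 4
      + (\<kappa> / 2) * ((x0 - \<beta>)^2 / (ln (x0 - \<beta>) - ln \<nu> - (\<kappa> * \<alpha> + 1)))"
    unfolding exp_value_log_def by (simp add: algebra_simps)
  then show "let xt = x0 - \<nu> * exp (\<kappa> * \<alpha>) in
      ereal (- \<kappa> * (\<beta> * exp 2)^2 / 4 + (\<kappa> / 2) * (xt^2 / (ln xt - ln \<nu> - (\<kappa> * \<alpha> + 1))))
        \<le> enn2ereal (fluid_value (exp_cost \<nu> \<kappa> \<alpha>) \<alpha> x0)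
      \<and> enn2ereal (fluid_value (exp_cost \<nu> \<kappa> \<alpha>) \<alpha> x0)
        \<le> ereal (\<kappa> / 16 * (4 * \<beta> + \<beta> * (exp 8 - 1))^2 + (\<kappa> / 2) * xt^2)"
    using exp_fluid_value_ge_log[OF \<nu> \<kappa>, of \<alpha> x0] exp_fluid_value_le_quadratic[OF \<alpha> \<nu> \<kappa> \<open>0 < x0\<close>] x0
    unfolding Let_def \<beta>_def by simp
qed

theorem proposition8:
  fixes \<alpha> \<nu> \<rho> \<kappa> :: real
  assumes "\<alpha> > 0" and "\<nu> > 0" and "\<rho> > 1" and "\<kappa> > 0"
  shows
   "(\<forall>x0\<ge>0.
       fluid_value (poly_cost \<nu> \<rho> \<alpha>) \<alpha> x0 =
         ennreal (\<nu> * x0 powr ((2*\<rho> - 1) / \<rho>) * (\<rho>^2 / (2*\<rho> - 1))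
                  * (1 / (\<nu> * (\<rho> - 1))) powr ((\<rho> - 1) / \<rho>))
     \<and> (\<exists>u. fluid_admissible \<alpha> x0 u \<and>
            (\<forall>t\<ge>0. u t = (fluid_state \<alpha> x0 u t / (\<nu> * (\<rho> - 1))) powr (1/\<rho>) + \<alpha>))
     \<and> (\<forall>u. fluid_admissible \<alpha> x0 u \<and>
            (\<forall>t\<ge>0. u t = (fluid_state \<alpha> x0 u t / (\<nu> * (\<rho> - 1))) powr (1/\<rho>) + \<alpha>)
            \<longrightarrow> fluid_cost (poly_cost \<nu> \<rho> \<alpha>) \<alpha> x0 u = fluid_value (poly_cost \<nu> \<rho> \<alpha>) \<alpha> x0))
    \<and>
    (\<exists>Cm Cp :: real. \<forall>x0. x0 \<ge> \<nu> * exp (\<kappa> * \<alpha>) * (exp 2 + 1) \<longrightarrow>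
       (let xt = x0 - \<nu> * exp (\<kappa> * \<alpha>) in
         ereal (Cm + (\<kappa> / 2) * (xt^2 / (ln xt - ln \<nu> - (\<kappa> * \<alpha> + 1))))
           \<le> enn2ereal (fluid_value (exp_cost \<nu> \<kappa> \<alpha>) \<alpha> x0)
         \<and> enn2ereal (fluid_value (exp_cost \<nu> \<kappa> \<alpha>) \<alpha> x0) \<le> ereal (Cp + (\<kappa> / 2) * xt^2)))"
proof (intro conjI allI impI exp_fluid_value_bounds)
  fix x0 :: real assume x0: "0 \<le> x0"
  show "fluid_value (poly_cost \<nu> \<rho> \<alpha>) \<alpha> x0 =
         ennreal (\<nu> * x0 powr ((2*\<rho> - 1) / \<rho>) * (\<rho>^2 / (2*\<rho> - 1))
                  * (1 / (\<nu> * (\<rho> - 1))) powr ((\<rho> - 1) / \<rho>))"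
    using fluid_value_poly_cost[OF assms(1-3) x0] by (simp add: poly_value_def)
  show "\<exists>u. fluid_admissible \<alpha> x0 u \<and>
            (\<forall>t\<ge>0. u t = (fluid_state \<alpha> x0 u t / (\<nu> * (\<rho> - 1))) powr (1/\<rho>) + \<alpha>)"
    using poly_feedback_exists[OF assms(1-3) x0] unfolding poly_feedback_def by blast
  fix u assume "fluid_admissible \<alpha> x0 u \<and>
            (\<forall>t\<ge>0. u t = (fluid_state \<alpha> x0 u t / (\<nu> * (\<rho> - 1))) powr (1/\<rho>) + \<alpha>)"
  then show "fluid_cost (poly_cost \<nu> \<rho> \<alpha>) \<alpha> x0 u = fluid_value (poly_cost \<nu> \<rho> \<alpha>) \<alpha> x0"
    using poly_feedback_optimal[OF assms(1-3) x0] unfolding poly_feedback_def by blast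
qed (use assms in auto)

end
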